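(* Let $\Gamma(\mathbf z)=\sum_{\mathbf i\in\mathbb N^d} f_{\mathbf i}\mathbf z^{\mathbf i}$ be a power series with nonnegative coefficients whose domain of absolute convergence has nonempty interior $\mathscr D\subset\mathbb C^d$, with $\mathscr D\ne\mathbb C^d$. Let $\nu(S)=\sum_{\mathbf i\in S\cap\mathbb N^d} f_{\mathbf i}$ for $S\subset\mathbb R^d$. Assume condition (CG): there exist $a,b,c>0$ with $\nu(B_{\mathbf x+\mathbf y}(a))\ge c\,\nu(B_{\mathbf x}(b))\nu(B_{\mathbf y}(b))$ for all $\mathbf x,\mathbf y\in\mathbb R^d$, and assume $\sup_{\|\mathbf x\|=1}\psi_\Gamma(\mathbf x)<\infty$. Then for every $\mathbf x\in\mathbb R^d_{\ge0}$, $$\psi_\Gamma(\mathbf x)=\inf_{\mathbf z\in\partial\mathscr D}\Big(-\sum_{i=1}^d x_i\log|z_i|\Big).$$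
   Context: $\|\cdot\|$ is the $\ell^1$ norm on $\mathbb R^d$, $B_{\mathbf x}(a)$ the ball of radius $a$ about $\mathbf x$ for this norm. The indicatrice $\psi_\Gamma$ is defined by: for an open cone $C\subset\mathbb R^d$, $\tau_C=\limsup_{R\to\infty}\frac1R\log\Big(\sum_{\mathbf i\in C\cap\mathbb N^d,\ R\le\|\mathbf i\|\le R+1} f_{\mathbf i}\Big)$ (with $\log0=-\infty$), and for $\mathbf x\ne0$, $\psi_\Gamma(\mathbf x)=\|\mathbf x\|\inf_{C\ni\mathbf x}\tau_C$ over open cones containing $\mathbf x$; $\psi_\Gamma(\mathbf 0)=0$. In the expression $-\sum x_i\log|z_i|$, a term with $z_i=0$ is $+\infty$ if $x_i>0$ and $0$ if $x_i=0$. *)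

theory Defs
  imports "HOL-Analysis.Analysis"
begin

definition l1norm :: "real ^ 'd \<Rightarrow> real" where
  "l1norm x = (\<Sum>j\<in>UNIV. \<bar>x $ j\<bar>)"

definition idx_vec :: "nat ^ 'd \<Rightarrow> real ^ 'd" where
  "idx_vec i = (\<chi> j. real (i $ j))"

definition monom :: "complex ^ 'd \<Rightarrow> nat ^ 'd \<Rightarrow> complex" where
  "monom z i = (\<Prod>j\<in>UNIV. (z $ j) ^ (i $ j))"

definition abs_conv_domain :: "(nat ^ 'd \<Rightarrow> real) \<Rightarrow> (complex ^ 'd) set" where
  "abs_conv_domain f = {z. (\<lambda>i. f i * norm (monom z i)) summable_on UNIV}"

definition nu_ball :: "(nat ^ 'd \<Rightarrow> real) \<Rightarrow> real ^ 'd \<Rightarrow> real \<Rightarrow> real" where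
  "nu_ball f x a = (\<Sum>i\<in>{i. l1norm (idx_vec i - x) \<le> a}. f i)"

definition open_cone :: "(real ^ 'd) set \<Rightarrow> bool" where
  "open_cone C \<longleftrightarrow> open C \<and> (\<forall>y\<in>C. \<forall>t>0. t *\<^sub>R y \<in> C)"

definition logE :: "real \<Rightarrow> ereal" where
  "logE s = (if s > 0 then ereal (ln s) else -\<infinity>)"

definition tau :: "(nat ^ 'd \<Rightarrow> real) \<Rightarrow> (real ^ 'd) set \<Rightarrow> ereal" where
  "tau f C = Limsup at_top (\<lambda>R::real. ereal (1 / R) *
      logE (\<Sum>i\<in>{i. idx_vec i \<in> C \<and> R \<le> l1norm (idx_vec i) \<and> l1norm (idx_vec i) \<le> R + 1}. f i))"

definition indicatrice :: "(nat ^ 'd \<Rightarrow> real) \<Rightarrow> real ^ 'd \<Rightarrow> ereal" where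
  "indicatrice f x = (if x = 0 then 0
     else ereal (l1norm x) * (INF C\<in>{C. open_cone C \<and> x \<in> C}. tau f C))"

definition neglogterm :: "real \<Rightarrow> complex \<Rightarrow> ereal" where
  "neglogterm xj zj = (if zj = 0 then (if xj > 0 then \<infinity> else 0)
                       else ereal (- xj * ln (norm zj)))"

end

(* Under the boundedness hypothesis the indicatrice psi is finite, positively homogeneous and
   upper semicontinuous; under (CG) it is moreover superadditive, because near-optimal lattice
   points along the rays through x and y can be concatenated, each use of (CG) losing only a
   constant factor. So the hypograph of psi is a closed convex cone and psi is the lower envelope
   of the linear functionals y |-> -<y, u> lying above it. For such a u the points exp (u + s)
   lie in the interior of the domain when s < 0, while the ray leaves the domain for large s; it
   therefore meets the frontier at some s >= 0, where -sum x_j log |z_j| <= -<x, u>.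
   Conversely, at a point z of the domain the terms f_i |z^i| are bounded, which bounds psi by
   -sum x_j log |z_j|, and this bound passes to the closure of the interior by continuity. *)

theory Submission
  imports Defs "HOL-Real_Asymp.Real_Asymp"
begin

section \<open>The $\ell^1$ norm and lattice points\<close>

lemma l1norm_nonneg: "l1norm x \<ge> 0"
  by (simp add: l1norm_def sum_nonneg)

lemma l1norm_triangle: "l1norm (x + y) \<le> l1norm x + l1norm y"
  unfolding l1norm_def by (simp add: sum.distrib[symmetric] sum_mono abs_triangle_ineq)

lemma l1norm_minus_commute: "l1norm (x - y) = l1norm (y - x)"
  unfolding l1norm_def by (simp add: abs_minus_commute)

lemma l1norm_scaleR: "l1norm (c *\<^sub>R x) = \<bar>c\<bar> * l1norm x"
  unfolding l1norm_def by (simp add: abs_mult sum_distrib_left)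

lemma l1norm_0 [simp]: "l1norm 0 = 0"
  unfolding l1norm_def by simp

lemma l1norm_eq_0_iff: "l1norm x = 0 \<longleftrightarrow> x = 0"
proof
  assume "l1norm x = 0"
  then have "\<forall>j\<in>UNIV. \<bar>x$j\<bar> = 0"
    unfolding l1norm_def by (subst (asm) sum_nonneg_eq_0_iff) auto
  then show "x = 0" by (simp add: vec_eq_iff)
qed simp

lemma l1norm_pos: "x \<noteq> 0 \<Longrightarrow> l1norm x > 0"
  using l1norm_nonneg[of x] l1norm_eq_0_iff[of x] by linarith

lemma abs_component_le_l1norm: "\<bar>x$j\<bar> \<le> l1norm x"
  unfolding l1norm_def by (rule member_le_sum) auto

lemma norm_le_l1norm: "norm x \<le> l1norm x"
  unfolding l1norm_def by (rule norm_le_l1_cart)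

lemma l1norm_reverse_triangle: "\<bar>l1norm x - l1norm y\<bar> \<le> l1norm (x - y)"
  using l1norm_triangle[of "x - y" y] l1norm_triangle[of "y - x" x] l1norm_minus_commute[of x y]
  by simp

lemma l1norm_near_ray: "l1norm (v - l *\<^sub>R x) \<le> e \<Longrightarrow> l \<ge> 0 \<Longrightarrow> \<bar>l1norm v - l * l1norm x\<bar> \<le> e"
  using l1norm_reverse_triangle[of v "l *\<^sub>R x"] by (simp add: l1norm_scaleR)

lemma l1norm_le_of_split:
  "x = y + z \<Longrightarrow> l1norm y \<le> a \<Longrightarrow> l1norm z \<le> b \<Longrightarrow> l1norm x \<le> a + b"
  using l1norm_triangle[of y z] by simp

lemma l1norm_eq_sum_of_nonneg: "(\<And>j. x$j \<ge> 0) \<Longrightarrow> l1norm x = (\<Sum>j\<in>UNIV. x$j)"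
  unfolding l1norm_def by simp

lemma continuous_on_l1norm [continuous_intros]:
  "continuous_on S g \<Longrightarrow> continuous_on S (\<lambda>x. l1norm (g x))"
  unfolding l1norm_def by (intro continuous_intros)

lemma abs_mult_sub_le: "\<bar>a - b\<bar> \<le> d \<Longrightarrow> \<bar>c * a - c * b\<bar> \<le> \<bar>c\<bar> * (d::real)"
  by (metis abs_ge_zero abs_mult mult_left_mono right_diff_distrib)

lemma l1norm_idx_vec: "l1norm (idx_vec i) = (\<Sum>j\<in>UNIV. real (i$j))"
  by (simp add: l1norm_def idx_vec_def)

lemma exists_sum_le_card_mult:
  fixes f :: "'a \<Rightarrow> real"
  assumes "finite S" "S \<noteq> {}"
  shows "\<exists>i\<in>S. sum f S \<le> real (card S) * f i"
proof -
  have "Max (f ` S) \<in> f ` S" using assms by (intro Max_in) auto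
  then obtain i where i: "i \<in> S" "f i = Max (f ` S)" by auto
  then have "sum f S \<le> real (card S) * f i"
    using assms by (intro sum_bounded_above) auto
  with i show ?thesis by blast
qed

definition lattice_box :: "nat \<Rightarrow> (nat^'d) set" where
  "lattice_box B = {i. \<forall>j. i$j \<le> B}"

lemma lattice_box_eq_image: "lattice_box B = vec_lambda ` PiE UNIV (\<lambda>_. {..B})"
proof
  show "lattice_box B \<subseteq> vec_lambda ` PiE UNIV (\<lambda>_. {..B})"
  proof
    fix i :: "nat^'d" assume "i \<in> lattice_box B"
    then have "(\<lambda>j. i$j) \<in> PiE UNIV (\<lambda>_. {..B})" by (auto simp: lattice_box_def)
    then show "i \<in> vec_lambda ` PiE UNIV (\<lambda>_. {..B})" by (metis image_eqI vec_lambda_eta)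
  qed
qed (auto simp: lattice_box_def)

lemma finite_lattice_box: "finite (lattice_box B)"
  by (simp add: lattice_box_eq_image finite_PiE)

lemma card_lattice_box: "card (lattice_box B :: (nat^'d) set) \<le> (B + 1) ^ CARD('d)"
proof -
  have "card (lattice_box B :: (nat^'d) set) \<le> card (PiE (UNIV::'d set) (\<lambda>_. {..B}))"
    unfolding lattice_box_eq_image by (rule card_image_le) (auto intro!: finite_PiE)
  then show ?thesis by (simp add: card_PiE)
qed

lemma lattice_box_cover: "finite F \<Longrightarrow> \<exists>B. F \<subseteq> lattice_box B"
proof (induction F rule: finite_induct)
  case (insert i F)
  then obtain B where "F \<subseteq> lattice_box B" by blast
  moreover have "i$j \<le> Max (range (($) i))" for j by (rule Max_ge) auto
  ultimately have "insert i F \<subseteq> lattice_box (max B (Max (range (($) i))))"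
    by (force simp: lattice_box_def le_max_iff_disj)
  then show ?case by blast
qed simp

text \<open>Translating the ball by its lower corner embeds its lattice points into a box of side $2a$.\<close>
lemma lattice_l1ball_embeds:
  "\<exists>m. inj_on (\<lambda>i. i - m) {i::nat^'d. l1norm (idx_vec i - z) \<le> a} \<and>
       (\<lambda>i. i - m) ` {i. l1norm (idx_vec i - z) \<le> a} \<subseteq> lattice_box (nat \<lfloor>2*a\<rfloor>)"
proof (intro exI conjI)
  define m :: "nat^'d" where "m = (\<chi> j. nat \<lceil>z$j - a\<rceil>)"
  define S where "S = {i::nat^'d. l1norm (idx_vec i - z) \<le> a}"
  have comp: "\<bar>real (i$j) - z$j\<bar> \<le> a" if "i \<in> S" for i j
    using abs_component_le_l1norm[of "idx_vec i - z" j] that by (simp add: S_def idx_vec_def)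
  have ge: "m$j \<le> i$j" if "i \<in> S" for i j
    using comp[OF that, of j] unfolding m_def by (simp add: nat_le_iff ceiling_le_iff)
  show "inj_on (\<lambda>i. i - m) S"
  proof (rule inj_onI)
    fix i k assume "i \<in> S" "k \<in> S" "i - m = k - m"
    then have "\<forall>j. i$j - m$j = k$j - m$j" by (simp add: vec_eq_iff)
    then show "i = k" using ge[OF \<open>i\<in>S\<close>] ge[OF \<open>k\<in>S\<close>]
      unfolding vec_eq_iff by (metis le_add_diff_inverse)
  qed
  show "(\<lambda>i. i - m) ` S \<subseteq> lattice_box (nat \<lfloor>2*a\<rfloor>)"
  proof (clarsimp simp: lattice_box_def)
    fix i j assume "i \<in> S"
    have "real (m$j) \<ge> z$j - a" unfolding m_def by simp linarith
    then have "real (i$j - m$j) \<le> 2*a"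
      using comp[OF \<open>i\<in>S\<close>, of j] ge[OF \<open>i\<in>S\<close>, of j] by (simp add: of_nat_diff)
    then show "i$j - m$j \<le> nat \<lfloor>2*a\<rfloor>" by (simp add: le_nat_iff le_floor_iff)
  qed
qed

lemma finite_lattice_l1ball: "finite {i::nat^'d. l1norm (idx_vec i - z) \<le> a}"
  using lattice_l1ball_embeds[of z a]
  by (metis finite_imageD finite_lattice_box finite_subset)

lemma card_lattice_l1ball:
  "card {i::nat^'d. l1norm (idx_vec i - z) \<le> a} \<le> (nat \<lfloor>2*a\<rfloor> + 1) ^ CARD('d)"
proof -
  obtain m where m: "inj_on (\<lambda>i. i - m) {i::nat^'d. l1norm (idx_vec i - z) \<le> a}"
    "(\<lambda>i. i - m) ` {i. l1norm (idx_vec i - z) \<le> a} \<subseteq> lattice_box (nat \<lfloor>2*a\<rfloor>)"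
    using lattice_l1ball_embeds by blast
  have "card {i::nat^'d. l1norm (idx_vec i - z) \<le> a} \<le> card (lattice_box (nat \<lfloor>2*a\<rfloor>) :: (nat^'d) set)"
    using card_mono[OF finite_lattice_box m(2)] card_image[OF m(1)] by simp
  then show ?thesis using card_lattice_box le_trans by blast
qed

lemma lattice_l1ball0_subset_box: "{i::nat^'d. l1norm (idx_vec i) \<le> R} \<subseteq> lattice_box (nat \<lfloor>R\<rfloor>)"
proof (clarsimp simp: lattice_box_def)
  fix i :: "nat^'d" and j assume "l1norm (idx_vec i) \<le> R"
  then have "real (i$j) \<le> R" using abs_component_le_l1norm[of "idx_vec i" j] by (simp add: idx_vec_def)
  then show "i$j \<le> nat \<lfloor>R\<rfloor>" by (simp add: le_nat_iff le_floor_iff)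
qed

lemma finite_lattice_l1ball0: "finite {i::nat^'d. l1norm (idx_vec i) \<le> R}"
  by (rule finite_subset[OF lattice_l1ball0_subset_box finite_lattice_box])

lemma card_lattice_l1ball0:
  assumes "R \<ge> 0"
  shows "real (card {i::nat^'d. l1norm (idx_vec i) \<le> R}) \<le> (R + 1) ^ CARD('d)"
proof -
  have "card {i::nat^'d. l1norm (idx_vec i) \<le> R} \<le> (nat \<lfloor>R\<rfloor> + 1) ^ CARD('d)"
    using card_mono[OF finite_lattice_box lattice_l1ball0_subset_box] card_lattice_box le_trans by blast
  then have "real (card {i::nat^'d. l1norm (idx_vec i) \<le> R}) \<le> (real (nat \<lfloor>R\<rfloor>) + 1) ^ CARD('d)"
    by (metis of_nat_1 of_nat_add of_nat_le_iff of_nat_power)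
  also have "\<dots> \<le> (R + 1) ^ CARD('d)" using assms by (intro power_mono) auto
  finally show ?thesis .
qed

lemma sum_exp_neg_l1norm_lattice_box_le:
  assumes r: "r > 0"
  shows "(\<Sum>i\<in>lattice_box B. exp (- r * l1norm (idx_vec (i::nat^'d)))) \<le> (1 / (1 - exp (-r))) ^ CARD('d)"
proof -
  define q where "q = exp (-r)"
  have q: "0 < q" "q < 1" using r by (auto simp: q_def)
  have "(\<Sum>i\<in>lattice_box B. exp (- r * l1norm (idx_vec (i::nat^'d))))
      = (\<Sum>i\<in>vec_lambda ` PiE (UNIV::'d set) (\<lambda>_. {..B}). \<Prod>j\<in>UNIV. q ^ (i$j))"
    by (simp add: lattice_box_eq_image l1norm_idx_vec sum_distrib_left exp_sum q_def
        exp_of_nat_mult[symmetric] mult.commute)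
  also have "\<dots> = (\<Sum>g\<in>PiE (UNIV::'d set) (\<lambda>_. {..B}). \<Prod>j\<in>UNIV. q ^ (g j))"
    by (subst sum.reindex) (auto simp: inj_on_def vec_lambda_inject)
  also have "\<dots> = (\<Prod>j\<in>(UNIV::'d set). \<Sum>k\<le>B. q ^ k)"
    by (rule prod_sum_PiE[symmetric]) auto
  also have "\<dots> \<le> (\<Prod>j\<in>(UNIV::'d set). 1 / (1 - q))"
  proof (rule prod_mono)
    have "(\<Sum>k\<le>B. q ^ k) = (1 - q ^ Suc B) / (1 - q)"
      using q by (simp only: lessThan_Suc_atMost[symmetric] sum_gp_strict) simp
    also have "\<dots> \<le> 1 / (1 - q)" using q by (intro divide_right_mono) auto
    finally show "0 \<le> (\<Sum>k\<le>B. q ^ k) \<and> (\<Sum>k\<le>B. q ^ k) \<le> 1 / (1 - q)"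
      using q by (auto intro: sum_nonneg)
  qed
  finally show ?thesis by (simp add: q_def)
qed

lemma summable_on_exp_neg_l1norm:
  assumes "r > 0"
  shows "(\<lambda>i::nat^'d. exp (- r * l1norm (idx_vec i))) summable_on UNIV"
proof (rule nonneg_bdd_above_summable_on)
  show "bdd_above (sum (\<lambda>i::nat^'d. exp (- r * l1norm (idx_vec i))) ` {F. F \<subseteq> UNIV \<and> finite F})"
  proof (rule bdd_aboveI2)
    fix F :: "(nat^'d) set" assume "F \<in> {F. F \<subseteq> UNIV \<and> finite F}"
    then obtain B where "F \<subseteq> lattice_box B" using lattice_box_cover by blast
    then have "sum (\<lambda>i. exp (- r * l1norm (idx_vec i))) F
        \<le> (\<Sum>i\<in>lattice_box B. exp (- r * l1norm (idx_vec (i::nat^'d))))"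
      by (rule sum_mono2[OF finite_lattice_box]) auto
    also have "\<dots> \<le> (1 / (1 - exp (-r))) ^ CARD('d)"
      by (rule sum_exp_neg_l1norm_lattice_box_le[OF assms])
    finally show "sum (\<lambda>i. exp (- r * l1norm (idx_vec i))) F \<le> (1 / (1 - exp (-r))) ^ CARD('d)" .
  qed
qed auto

lemma tendsto_ln_poly_div: "((\<lambda>R::real. (c * ln (R + 2) + b) / R) \<longlongrightarrow> 0) at_top"
proof -
  have "((\<lambda>R::real. c * (ln (R + 2) / R) + b * (1 / R)) \<longlongrightarrow> c * 0 + b * 0) at_top"
    by (intro tendsto_intros) real_asymp+
  then show ?thesis by (simp add: add_divide_distrib)
qed

section \<open>Shells, cones and the exponential growth rate $\tau$\<close>

definition shell :: "(real^'d) set \<Rightarrow> real \<Rightarrow> (nat^'d) set" where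
  "shell C R = {i. idx_vec i \<in> C \<and> R \<le> l1norm (idx_vec i) \<and> l1norm (idx_vec i) \<le> R + 1}"

lemma finite_shell: "finite (shell C R)"
  by (rule finite_subset[OF _ finite_lattice_l1ball0[of "R + 1"]]) (auto simp: shell_def)

lemma card_shell:
  assumes "R \<ge> 0"
  shows "real (card (shell C R :: (nat^'d) set)) \<le> (R + 2) ^ CARD('d)"
proof -
  have "card (shell C R) \<le> card {i::nat^'d. l1norm (idx_vec i) \<le> R + 1}"
    by (rule card_mono[OF finite_lattice_l1ball0]) (auto simp: shell_def)
  then show ?thesis
    using card_lattice_l1ball0[of "R + 1", where 'd='d] assms by (simp add: add.assoc)
qed

lemma tau_eq_Limsup_shell: "tau f C = Limsup at_top (\<lambda>R. ereal (1/R) * logE (sum f (shell C R)))"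
  by (simp add: tau_def shell_def)

lemma inverse_mult_logE:
  assumes "R > 0"
  shows "ereal (1/R) * logE s = (if s > 0 then ereal (ln s / R) else -\<infinity>)"
  using assms by (simp add: logE_def)

lemma tau_le_of_shell_bound:
  fixes f :: "nat^'d \<Rightarrow> real"
  assumes bound: "\<And>R i. R \<ge> R0 \<Longrightarrow> i \<in> shell C R \<Longrightarrow> f i \<le> exp (\<alpha> * R + \<beta>)"
  shows "tau f C \<le> ereal \<alpha>"
proof -
  define g where "g R = \<alpha> + (real CARD('d) * ln (R + 2) + \<beta>) / R" for R :: real
  have "eventually (\<lambda>R. ereal (1/R) * logE (sum f (shell C R)) \<le> ereal (g R)) at_top"
    using eventually_ge_at_top[of "max R0 1"]
  proof eventually_elim
    case (elim R)
    show ?case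
    proof (cases "sum f (shell C R) > 0")
      case True
      have "sum f (shell C R) \<le> of_nat (card (shell C R)) * exp (\<alpha> * R + \<beta>)"
        by (rule sum_bounded_above) (use bound elim in auto)
      also have "\<dots> \<le> (R + 2) ^ CARD('d) * exp (\<alpha> * R + \<beta>)"
        using card_shell[of R C] elim by (intro mult_right_mono) auto
      finally have "ln (sum f (shell C R)) \<le> real CARD('d) * ln (R + 2) + (\<alpha> * R + \<beta>)"
        using True elim by (simp add: ln_mult ln_realpow flip: ln_le_cancel_iff)
      then have "ln (sum f (shell C R)) / R \<le> g R"
        using elim by (simp add: g_def field_simps)
      then show ?thesis using True elim by (simp add: inverse_mult_logE)
    qed (use elim in \<open>simp add: inverse_mult_logE\<close>)
  qed
  then have "tau f C \<le> Limsup at_top (\<lambda>R. ereal (g R))"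
    unfolding tau_eq_Limsup_shell by (rule Limsup_mono)
  also have "\<dots> = ereal \<alpha>"
  proof (rule lim_imp_Limsup)
    have "(g \<longlongrightarrow> \<alpha> + 0) at_top"
      unfolding g_def by (intro tendsto_intros tendsto_ln_poly_div)
    then show "((\<lambda>R. ereal (g R)) \<longlongrightarrow> ereal \<alpha>) at_top" by simp
  qed simp
  finally show ?thesis .
qed

lemma exists_rate_ge_of_less_tau:
  assumes "ereal \<theta> < tau f C"
  shows "\<exists>R\<ge>R0. ereal \<theta> \<le> ereal (1/R) * logE (sum f (shell C R))"
proof -
  have "\<not> tau f C \<le> ereal \<theta>" using assms by simp
  then obtain y where y: "y > ereal \<theta>"
    "\<not> eventually (\<lambda>R. y > ereal (1/R) * logE (sum f (shell C R))) at_top"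
    unfolding tau_eq_Limsup_shell Limsup_le_iff by blast
  have "\<not> eventually (\<lambda>R. ereal (1/R) * logE (sum f (shell C R)) < ereal \<theta>) at_top"
  proof
    assume "eventually (\<lambda>R. ereal (1/R) * logE (sum f (shell C R)) < ereal \<theta>) at_top"
    then have "eventually (\<lambda>R. y > ereal (1/R) * logE (sum f (shell C R))) at_top"
      by eventually_elim (use y(1) in auto)
    with y(2) show False by simp
  qed
  then have "\<exists>R\<ge>R0. \<not> ereal (1/R) * logE (sum f (shell C R)) < ereal \<theta>"
    unfolding eventually_at_top_linorder by blast
  then show ?thesis by (auto simp: not_less)
qed

locale nonneg_power_series =
  fixes f :: "nat^'d \<Rightarrow> real"
  assumes nonneg: "\<And>i. f i \<ge> 0"
begin

lemma le_sum_shell: "i \<in> shell C R \<Longrightarrow> f i \<le> sum f (shell C R)"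
  by (rule member_le_sum[OF _ _ finite_shell]) (auto simp: nonneg)

lemma tau_ge_of_witnesses:
  assumes witness: "\<And>R0. \<exists>i. idx_vec i \<in> C \<and> R0 \<le> l1norm (idx_vec i) \<and> f i > 0 \<and>
                             \<theta> * l1norm (idx_vec i) \<le> ln (f i)"
  shows "ereal \<theta> \<le> tau f C"
proof (rule ccontr)
  assume "\<not> ereal \<theta> \<le> tau f C"
  then have "tau f C < ereal \<theta>" by simp
  from Limsup_lessD[OF this[unfolded tau_eq_Limsup_shell]]
  obtain N where N: "\<And>R. R \<ge> N \<Longrightarrow> ereal (1/R) * logE (sum f (shell C R)) < ereal \<theta>"
    unfolding eventually_at_top_linorder by blast
  obtain i where i: "idx_vec i \<in> C" "max N 1 \<le> l1norm (idx_vec i)" "f i > 0"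
    "\<theta> * l1norm (idx_vec i) \<le> ln (f i)"
    using witness by blast
  define R where "R = l1norm (idx_vec i)"
  have R: "R \<ge> 1" "R \<ge> N" using i by (auto simp: R_def)
  have "i \<in> shell C R" using i by (simp add: shell_def R_def)
  then have S: "f i \<le> sum f (shell C R)" by (rule le_sum_shell)
  have "ln (f i) \<le> ln (sum f (shell C R))" using S i(3) by simp
  then have "\<theta> * R \<le> ln (sum f (shell C R))" using i(4) by (simp add: R_def)
  then have "\<theta> \<le> ln (sum f (shell C R)) / R" using R by (simp add: field_simps)
  with N[OF R(2)] S i R show False by (simp add: inverse_mult_logE)
qed

text \<open>The polynomially many lattice points of a shell cost only a subexponential factor.\<close>
lemma shell_witness_of_less_tau:
  assumes "ereal \<theta> < tau f C"
  shows "\<exists>R\<ge>R0. \<exists>i\<in>shell C R. f i > 0 \<and> \<theta> * R \<le> ln (f i)"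
proof -
  obtain \<theta>' where "ereal \<theta> < ereal \<theta>'" "ereal \<theta>' < tau f C"
    using ereal_dense2[OF assms] by blast
  then have \<theta>': "\<theta> < \<theta>'" "ereal \<theta>' < tau f C" by simp_all
  have "eventually (\<lambda>R. (real CARD('d) * ln (R + 2) + 0) / R < \<theta>' - \<theta>) at_top"
    using order_tendstoD(2)[OF tendsto_ln_poly_div] \<theta>' by (simp only: diff_gt_0_iff_gt)
  then obtain R1 where R1: "\<And>R. R \<ge> R1 \<Longrightarrow> real CARD('d) * ln (R + 2) / R < \<theta>' - \<theta>"
    unfolding eventually_at_top_linorder by auto
  obtain R where R: "R \<ge> max (max R0 R1) 1" "ereal \<theta>' \<le> ereal (1/R) * logE (sum f (shell C R))"
    using exists_rate_ge_of_less_tau[OF \<theta>'(2)] by blast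
  have pos: "sum f (shell C R) > 0"
    using R by (cases "sum f (shell C R) > 0") (auto simp: inverse_mult_logE)
  then have "\<theta>' * R \<le> ln (sum f (shell C R))"
    using R by (simp add: inverse_mult_logE field_simps)
  have "shell C R \<noteq> {}" using pos by auto
  then obtain i where i: "i \<in> shell C R" "sum f (shell C R) \<le> real (card (shell C R)) * f i"
    using exists_sum_le_card_mult[OF finite_shell] by blast
  have "real (card (shell C R)) \<le> (R + 2) ^ CARD('d)" using R by (intro card_shell) auto
  then have S: "sum f (shell C R) \<le> (R + 2) ^ CARD('d) * f i"
    using i(2) mult_right_mono[OF _ nonneg[of i]] by fastforce
  then have fi: "f i > 0" using pos nonneg[of i] by (cases "f i = 0") auto
  have "ln (sum f (shell C R)) \<le> ln ((R + 2) ^ CARD('d) * f i)"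
    using S pos fi R by (subst ln_le_cancel_iff) auto
  also have "\<dots> = real CARD('d) * ln (R + 2) + ln (f i)"
    using fi R by (simp add: ln_mult ln_realpow)
  finally have "\<theta>' * R \<le> real CARD('d) * ln (R + 2) + ln (f i)"
    using \<open>\<theta>' * R \<le> ln (sum f (shell C R))\<close> by linarith
  moreover have "real CARD('d) * ln (R + 2) < (\<theta>' - \<theta>) * R"
    using R1[of R] R by (simp add: field_simps)
  ultimately have "\<theta> * R \<le> ln (f i)" by (simp add: algebra_simps)
  then show ?thesis using R i fi by auto
qed

lemma shell_bound_of_tau_less:
  assumes "tau f C < ereal \<theta>"
  shows "\<exists>R0. \<forall>R\<ge>R0. \<forall>i\<in>shell C R. f i \<le> exp (\<theta> * R)"
proof -
  from Limsup_lessD[OF assms[unfolded tau_eq_Limsup_shell]]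
  obtain N where N: "\<And>R. R \<ge> N \<Longrightarrow> ereal (1/R) * logE (sum f (shell C R)) < ereal \<theta>"
    unfolding eventually_at_top_linorder by blast
  have "f i \<le> exp (\<theta> * R)" if R: "max N 1 \<le> R" and i: "i \<in> shell C R" for R i
  proof (cases "f i > 0")
    case True
    have S: "f i \<le> sum f (shell C R)" by (rule le_sum_shell[OF i])
    with True N[of R] R have "ln (sum f (shell C R)) < \<theta> * R"
      by (simp add: inverse_mult_logE field_simps)
    then have "sum f (shell C R) < exp (\<theta> * R)"
      using S True by (metis exp_less_mono exp_ln order.strict_trans2)
    with S show ?thesis by simp
  qed (use exp_gt_zero[of "\<theta> * R"] in linarith)
  then show ?thesis by blast
qed

end

lemma tau_eq_minf_of_lattice_free:
  assumes "\<And>i. idx_vec i \<notin> C"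
  shows "tau f C = -\<infinity>"
proof -
  have "tau f C \<le> ereal \<alpha>" for \<alpha>
    by (rule tau_le_of_shell_bound) (use assms in \<open>auto simp: shell_def\<close>)
  from this[of "real_of_ereal (tau f C) - 1"] this[of 0] show ?thesis
    by (cases "tau f C") auto
qed

definition approx_cone :: "real^'d \<Rightarrow> real \<Rightarrow> (real^'d) set" where
  "approx_cone x \<epsilon> = {w. \<exists>s>0. l1norm (w - s *\<^sub>R x) < \<epsilon> * s}"

definition slope_cone :: "real^'d \<Rightarrow> real \<Rightarrow> (real^'d) set" where
  "slope_cone v c = {w. inner w v < c * l1norm w}"

lemma open_cone_approx_cone: "open_cone (approx_cone x \<epsilon>)"
  unfolding open_cone_def
proof safe
  have "approx_cone x \<epsilon> = (\<Union>s\<in>{0<..}. {w. l1norm (w - s *\<^sub>R x) < \<epsilon> * s})"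
    by (auto simp: approx_cone_def)
  then show "open (approx_cone x \<epsilon>)"
    by (simp only:) (intro open_UN ballI open_Collect_less continuous_intros)
next
  fix y and t :: real assume "y \<in> approx_cone x \<epsilon>" "t > 0"
  then obtain s where "s > 0" "l1norm (y - s *\<^sub>R x) < \<epsilon> * s" by (auto simp: approx_cone_def)
  moreover have "t *\<^sub>R y - (t * s) *\<^sub>R x = t *\<^sub>R (y - s *\<^sub>R x)" by (simp add: algebra_simps)
  ultimately show "t *\<^sub>R y \<in> approx_cone x \<epsilon>"
    using \<open>t > 0\<close> unfolding approx_cone_def
    by (intro CollectI exI[of _ "t * s"]) (simp add: l1norm_scaleR)
qed

lemma open_cone_Int: "open_cone A \<Longrightarrow> open_cone B \<Longrightarrow> open_cone (A \<inter> B)"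
  unfolding open_cone_def by auto

lemma mem_approx_cone: "\<epsilon> > 0 \<Longrightarrow> x \<in> approx_cone x \<epsilon>"
  unfolding approx_cone_def by (intro CollectI exI[of _ 1]) simp

lemma open_cone_slope_cone: "open_cone (slope_cone v c)"
  unfolding open_cone_def slope_cone_def
proof safe
  show "open {w. inner w v < c * l1norm w}"
    by (intro open_Collect_less continuous_intros)
  fix y and t :: real assume "inner y v < c * l1norm y" "t > 0"
  then show "inner (t *\<^sub>R y) v < c * l1norm (t *\<^sub>R y)"
    by (simp add: l1norm_scaleR)
qed

lemma open_cone_l1_approx:
  assumes "open_cone C" "z \<in> C"
  obtains r where "r > 0" "\<And>w s. s > 0 \<Longrightarrow> l1norm (w - s *\<^sub>R z) < s * r \<Longrightarrow> w \<in> C"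
proof -
  from assms obtain r where r: "r > 0" "ball z r \<subseteq> C"
    unfolding open_cone_def using open_contains_ball by blast
  have "w \<in> C" if "s > 0" "l1norm (w - s *\<^sub>R z) < s * r" for w s
  proof -
    have "w - s *\<^sub>R z = s *\<^sub>R ((1/s) *\<^sub>R w - z)" using that by (simp add: algebra_simps)
    then have "l1norm ((1/s) *\<^sub>R w - z) < r"
      using that by (simp add: l1norm_scaleR)
    then have "(1/s) *\<^sub>R w \<in> C"
      using r norm_le_l1norm[of "(1/s) *\<^sub>R w - z"] by (auto simp: dist_norm norm_minus_commute)
    then have "s *\<^sub>R ((1/s) *\<^sub>R w) \<in> C" using assms(1) that(1) unfolding open_cone_def by blast
    then show "w \<in> C" using that(1) by simp
  qed
  with r show ?thesis using that by blast
qed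

section \<open>The indicatrice and the domain of convergence\<close>

lemma norm_monom_eq_exp_inner:
  assumes "\<forall>j. z$j \<noteq> 0"
  shows "norm (monom z i) = exp (inner (idx_vec i) (\<chi> j. ln (norm (z$j))))"
proof -
  have "norm (monom z i) = (\<Prod>j\<in>UNIV. norm (z$j) ^ (i$j))"
    by (simp add: monom_def prod_norm[symmetric] norm_power)
  also have "\<dots> = (\<Prod>j\<in>UNIV. exp (real (i$j) * ln (norm (z$j))))"
    using assms by (intro prod.cong refl) (simp add: exp_of_nat_mult)
  also have "\<dots> = exp (inner (idx_vec i) (\<chi> j. ln (norm (z$j))))"
    by (simp add: exp_sum inner_vec_def idx_vec_def)
  finally show ?thesis .
qed

lemma norm_monom_mono: "(\<forall>j. norm (z$j) \<le> norm (w$j)) \<Longrightarrow> norm (monom z i) \<le> norm (monom w i)"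
  unfolding monom_def prod_norm[symmetric] norm_power
  by (intro prod_mono) (auto intro: power_mono)

definition l1_simplex :: "(real^'d) set" where
  "l1_simplex = {y. (\<forall>j. y$j \<ge> 0) \<and> l1norm y = 1}"

lemma compact_l1_simplex: "compact l1_simplex"
proof -
  have "l1_simplex = (\<Inter>j. {y::real^'d. 0 \<le> y$j}) \<inter> {y. l1norm y = 1}"
    by (auto simp: l1_simplex_def)
  moreover have "closed {y::real^'d. 0 \<le> y$j}" for j
    by (intro closed_Collect_le continuous_intros)
  moreover have "closed {y::real^'d. l1norm y = 1}"
    by (intro closed_Collect_eq continuous_intros)
  ultimately have "closed (l1_simplex :: (real^'d) set)" by (metis closed_INT closed_Int)
  moreover have "bounded (l1_simplex :: (real^'d) set)" unfolding bounded_iff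
    by (rule exI[of _ 1]) (auto simp: l1_simplex_def intro: order.trans[OF norm_le_l1norm])
  ultimately show ?thesis by (simp add: compact_eq_bounded_closed)
qed

lemma exists_nonzero_components_near:
  fixes w :: "complex^'d"
  assumes "open U" "w \<in> U" "e > 0"
  shows "\<exists>w'\<in>U. dist w' w < e \<and> (\<forall>j. w'$j \<noteq> 0)"
proof -
  obtain e1 where e1: "e1 > 0" "ball w e1 \<subseteq> U" using assms open_contains_ball by blast
  define \<eta> where "\<eta> = min e1 e / (2 * real CARD('d))"
  have \<eta>: "\<eta> > 0" "real CARD('d) * \<eta> < min e1 e" using e1 assms by (auto simp: \<eta>_def field_simps)
  define v :: "complex^'d" where "v = (\<chi> j. if w$j = 0 then complex_of_real \<eta> else 0)"
  have "norm v = L2_set (\<lambda>j. norm (v$j)) UNIV" by (simp add: norm_vec_def)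
  also have "\<dots> \<le> (\<Sum>j\<in>UNIV. norm (v$j))" by (rule L2_set_le_sum) simp
  also have "\<dots> \<le> (\<Sum>j\<in>(UNIV::'d set). \<eta>)" by (intro sum_mono) (use \<eta> in \<open>simp add: v_def\<close>)
  finally have "norm v < min e1 e" using \<eta> by simp
  then have "w + v \<in> U" "dist (w + v) w < e" using e1 by (auto simp: dist_norm)
  moreover have "\<forall>j. (w + v)$j \<noteq> 0" using \<eta> by (auto simp: v_def)
  ultimately show ?thesis by blast
qed

context nonneg_power_series
begin

abbreviation psi :: "real^'d \<Rightarrow> ereal" where
  "psi \<equiv> indicatrice f"

lemma indicatrice_0 [simp]: "psi 0 = 0"
  by (simp add: indicatrice_def)

lemma indicatrice_nonzero:
  "x \<noteq> 0 \<Longrightarrow> psi x = ereal (l1norm x) * (INF C\<in>{C. open_cone C \<and> x \<in> C}. tau f C)"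
  by (simp add: indicatrice_def)

lemma indicatrice_le_tau:
  "x \<noteq> 0 \<Longrightarrow> open_cone C \<Longrightarrow> x \<in> C \<Longrightarrow> psi x \<le> ereal (l1norm x) * tau f C"
  unfolding indicatrice_nonzero by (rule ereal_mult_left_mono) (auto intro: INF_lower simp: l1norm_nonneg)

lemma le_indicatrice_of_le_tau:
  assumes "x \<noteq> 0" "\<And>C. open_cone C \<Longrightarrow> x \<in> C \<Longrightarrow> ereal t \<le> tau f C"
  shows "ereal (l1norm x * t) \<le> psi x"
proof -
  have "ereal t \<le> (INF C\<in>{C. open_cone C \<and> x \<in> C}. tau f C)"
    using assms(2) by (auto intro: INF_greatest)
  then have "ereal (l1norm x) * ereal t \<le> ereal (l1norm x) * (INF C\<in>{C. open_cone C \<and> x \<in> C}. tau f C)"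
    by (rule ereal_mult_left_mono) (simp add: l1norm_nonneg)
  then show ?thesis by (simp add: indicatrice_nonzero[OF assms(1)])
qed

lemma exists_cone_of_indicatrice_less:
  assumes "x \<noteq> 0" "psi x < c"
  obtains C where "open_cone C" "x \<in> C" "ereal (l1norm x) * tau f C < c"
proof -
  define l where "l = l1norm x"
  have l: "l > 0" using l1norm_pos[OF assms(1)] by (simp add: l_def)
  have "(INF C\<in>{C. open_cone C \<and> x \<in> C}. tau f C) * ereal l < c"
    using assms by (simp add: indicatrice_nonzero l_def mult.commute)
  then have "(INF C\<in>{C. open_cone C \<and> x \<in> C}. tau f C) < c / ereal l"
    using l by (simp add: ereal_less_divide_iff)
  then obtain C where "open_cone C" "x \<in> C" "tau f C < c / ereal l"
    by (auto simp: INF_less_iff)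
  moreover from this(3) have "ereal l * tau f C < c"
    using l by (simp add: ereal_less_divide_iff mult.commute)
  ultimately show ?thesis using that by (simp add: l_def)
qed

lemma le_tau_of_le_indicatrice:
  assumes "x \<noteq> 0" "ereal t \<le> psi x" "open_cone C" "x \<in> C"
  shows "ereal (t / l1norm x) \<le> tau f C"
proof -
  have l: "l1norm x > 0" by (rule l1norm_pos[OF assms(1)])
  have "ereal t \<le> ereal (l1norm x) * tau f C"
    using assms(2) indicatrice_le_tau[OF assms(1,3,4)] by (rule order.trans)
  then show ?thesis using l by (cases "tau f C") (auto simp: field_simps)
qed

lemma indicatrice_eq_minf_of_negative:
  assumes "x$j < 0"
  shows "psi x = -\<infinity>"
proof -
  have x0: "x \<noteq> 0" using assms by auto
  define C where "C = {w::real^'d. w$j < 0}"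
  have "open_cone C" unfolding open_cone_def C_def
    by (auto intro!: open_Collect_less continuous_intros simp: mult_pos_neg)
  moreover have "x \<in> C" using assms by (simp add: C_def)
  ultimately have "psi x \<le> ereal (l1norm x) * tau f C" by (rule indicatrice_le_tau[OF x0])
  moreover have "tau f C = -\<infinity>"
    by (rule tau_eq_minf_of_lattice_free) (simp add: C_def idx_vec_def)
  ultimately show ?thesis using l1norm_pos[OF x0] by simp
qed

lemma nonneg_of_indicatrice_gt_minf: "psi x > -\<infinity> \<Longrightarrow> x$j \<ge> 0"
  using indicatrice_eq_minf_of_negative[of x j] by force

lemma indicatrice_scaleR:
  assumes "t > 0"
  shows "psi (t *\<^sub>R x) = ereal t * psi x"
proof (cases "x = 0")
  case False
  have "open_cone C \<Longrightarrow> t *\<^sub>R x \<in> C \<longleftrightarrow> x \<in> C" for C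
    using assms unfolding open_cone_def
    by (metis divideR_right less_numeral_extra(3) positive_imp_inverse_positive)
  then have "{C. open_cone C \<and> t *\<^sub>R x \<in> C} = {C. open_cone C \<and> x \<in> C}" by blast
  then show ?thesis using False assms
    by (simp add: indicatrice_nonzero l1norm_scaleR mult.assoc[symmetric]
        times_ereal.simps(1)[symmetric] del: times_ereal.simps)
qed simp

lemma le_indicatrice_scaleR:
  assumes "ereal t \<le> psi y" "s \<ge> 0"
  shows "ereal (s * t) \<le> psi (s *\<^sub>R y)"
proof (cases "s = 0")
  case False
  then have "ereal s * ereal t \<le> ereal s * psi y"
    using assms by (intro ereal_mult_left_mono) auto
  with False assms show ?thesis by (simp add: indicatrice_scaleR)
qed simp

text \<open>On the cone \<open>slope_cone v g\<close> the bound gives growth rate at most \<open>g\<close>, and this cone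
  contains \<open>y\<close> for every \<open>g > \<langle>y, v\<rangle> / |y|\<close>.\<close>
lemma indicatrice_le_of_coeff_bound:
  assumes bound: "\<And>i. f i \<le> M * exp (inner (idx_vec i) v)"
  shows "psi y \<le> ereal (inner y v)"
proof (cases "y = 0")
  case False
  define Y where "Y = l1norm y"
  have Y: "Y > 0" using l1norm_pos[OF False] by (simp add: Y_def)
  define M' where "M' = max M 1"
  have fM: "f i \<le> exp (inner (idx_vec i) v + ln M')" for i
  proof -
    have "f i \<le> M' * exp (inner (idx_vec i) v)"
      using bound[of i] by (rule order.trans) (simp add: M'_def)
    then show ?thesis by (simp add: exp_add M'_def mult.commute)
  qed
  have "psi y \<le> ereal (inner y v) + ereal e" if e: "e > 0" for e
  proof -
    define g where "g = (inner y v + e) / Y"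
    have "y \<in> slope_cone v g" using e Y by (simp add: slope_cone_def g_def Y_def)
    note C = open_cone_slope_cone this
    have "tau f (slope_cone v g) \<le> ereal g"
    proof (rule tau_le_of_shell_bound[where \<beta> = "\<bar>g\<bar> + ln M'"])
      fix R i assume "R \<ge> 0" "i \<in> shell (slope_cone v g) R"
      then have i: "inner (idx_vec i) v < g * l1norm (idx_vec i)"
        "\<bar>l1norm (idx_vec i) - R\<bar> \<le> 1" by (auto simp: shell_def slope_cone_def)
      have "g * (l1norm (idx_vec i) - R) \<le> \<bar>g\<bar> * \<bar>l1norm (idx_vec i) - R\<bar>"
        by (metis abs_ge_self abs_mult)
      also have "\<dots> \<le> \<bar>g\<bar>" using i(2) by (simp add: mult_left_le)
      finally have "g * (l1norm (idx_vec i) - R) \<le> \<bar>g\<bar>" .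
      then have "inner (idx_vec i) v + ln M' \<le> g * R + (\<bar>g\<bar> + ln M')"
        using i(1) by (simp add: algebra_simps)
      then have "exp (inner (idx_vec i) v + ln M') \<le> exp (g * R + (\<bar>g\<bar> + ln M'))" by simp
      then show "f i \<le> exp (g * R + (\<bar>g\<bar> + ln M'))" using fM[of i] by linarith
    qed
    then have "ereal Y * tau f (slope_cone v g) \<le> ereal Y * ereal g"
      using Y by (intro ereal_mult_left_mono) auto
    then have "psi y \<le> ereal Y * ereal g"
      using indicatrice_le_tau[OF False C] by (simp add: Y_def)
    then show ?thesis using Y by (simp add: g_def)
  qed
  then show ?thesis by (rule ereal_le_epsilon2)
qed simp

lemma indicatrice_le_of_mem_domain:
  assumes z: "z \<in> abs_conv_domain f" "\<forall>j. z$j \<noteq> 0"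
  shows "psi y \<le> ereal (- inner y (\<chi> j. ln (norm (z$j))))"
proof -
  define V where "V = (\<chi> j. ln (norm (z$j)))"
  define g where "g i = f i * norm (monom z i)" for i
  have gs: "g summable_on UNIV" using z(1) by (simp add: abs_conv_domain_def g_def[abs_def])
  have "f i \<le> infsum g UNIV * exp (inner (idx_vec i) (- V))" for i
  proof -
    have "infsum g {i} \<le> infsum g UNIV"
      using gs by (intro infsum_mono_neutral) (auto simp: g_def nonneg)
    then have "f i * exp (inner (idx_vec i) V) \<le> infsum g UNIV"
      using norm_monom_eq_exp_inner[OF z(2), of i] by (simp add: g_def V_def)
    then show ?thesis by (simp add: inner_minus_right exp_minus field_simps)
  qed
  then have "psi y \<le> ereal (inner y (- V))" by (rule indicatrice_le_of_coeff_bound)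
  then show ?thesis by (simp add: V_def)
qed

lemma abs_conv_domain_mono:
  assumes "w \<in> abs_conv_domain f" "\<forall>j. norm (z$j) \<le> norm (w$j)"
  shows "z \<in> abs_conv_domain f"
proof -
  have "(\<lambda>i. f i * norm (monom w i)) summable_on UNIV"
    using assms(1) by (simp add: abs_conv_domain_def)
  then have "(\<lambda>i. f i * norm (monom z i)) summable_on UNIV"
    by (rule summable_on_comparison_test)
      (auto intro!: mult_left_mono mult_nonneg_nonneg norm_monom_mono assms(2) nonneg)
  then show ?thesis by (simp add: abs_conv_domain_def)
qed

end

context nonneg_power_series
begin

lemma local_coeff_decay_of_indicatrice_le:
  assumes \<delta>: "\<delta> > 0" and y: "y \<in> l1_simplex" and le: "psi y \<le> ereal (- inner y u - \<delta>)"
  obtains C R where "open_cone C" "y \<in> C"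
    "\<And>i. idx_vec i \<in> C \<Longrightarrow> R \<le> l1norm (idx_vec i) \<Longrightarrow>
          f i * exp (inner (idx_vec i) u) \<le> exp (- (\<delta>/4) * l1norm (idx_vec i))"
proof -
  have y0: "y \<noteq> 0" and l1: "l1norm y = 1" using y by (auto simp: l1_simplex_def)
  have "psi y < ereal (- inner y u - \<delta>/2)" using le \<delta> by (simp add: le_ereal_less)
  then obtain C where C: "open_cone C" "y \<in> C" "ereal (l1norm y) * tau f C < ereal (- inner y u - \<delta>/2)"
    using exists_cone_of_indicatrice_less[OF y0] by blast
  then have "tau f C < ereal (- inner y u - \<delta>/2)" using l1 by simp
  then obtain R where R: "\<And>R' i. R' \<ge> R \<Longrightarrow> i \<in> shell C R' \<Longrightarrow> f i \<le> exp ((- inner y u - \<delta>/2) * R')"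
    using shell_bound_of_tau_less by blast
  define C' where "C' = C \<inter> slope_cone u (inner y u + \<delta>/4)"
  have "open_cone C'" unfolding C'_def using C(1) by (intro open_cone_Int open_cone_slope_cone)
  moreover have "y \<in> C'" using C(2) l1 \<delta> by (simp add: C'_def slope_cone_def)
  moreover have "f i * exp (inner (idx_vec i) u) \<le> exp (- (\<delta>/4) * l1norm (idx_vec i))"
    if i: "idx_vec i \<in> C'" "R \<le> l1norm (idx_vec i)" for i
  proof -
    define n where "n = l1norm (idx_vec i)"
    have "f i \<le> exp ((- inner y u - \<delta>/2) * n)"
      using i by (intro R) (auto simp: C'_def shell_def n_def)
    moreover have "exp (inner (idx_vec i) u) \<le> exp ((inner y u + \<delta>/4) * n)"
      using i(1) by (simp add: C'_def slope_cone_def n_def)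
    ultimately have "f i * exp (inner (idx_vec i) u) \<le> exp ((- inner y u - \<delta>/2) * n) * exp ((inner y u + \<delta>/4) * n)"
      using nonneg[of i] by (intro mult_mono) auto
    also have "\<dots> = exp (- (\<delta>/4) * n)" by (simp add: exp_add[symmetric] algebra_simps)
    finally show ?thesis by (simp add: n_def)
  qed
  ultimately show ?thesis by (rule that)
qed

text \<open>Compactness of the simplex turns the local decay bounds into a uniform one.\<close>
lemma coeff_decay_of_indicatrice_le:
  assumes \<delta>: "\<delta> > 0" and le: "\<And>y. y \<in> l1_simplex \<Longrightarrow> psi y \<le> ereal (- inner y u - \<delta>)"
  obtains Rm where "\<And>i. Rm < l1norm (idx_vec i) \<Longrightarrow>
           f i * exp (inner (idx_vec i) u) \<le> exp (- (\<delta>/4) * l1norm (idx_vec i))"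
proof -
  have "\<exists>C R. open_cone C \<and> y \<in> C \<and> (\<forall>i. idx_vec i \<in> C \<longrightarrow> R \<le> l1norm (idx_vec i) \<longrightarrow>
          f i * exp (inner (idx_vec i) u) \<le> exp (- (\<delta>/4) * l1norm (idx_vec i)))"
    if y: "y \<in> l1_simplex" for y
    using local_coeff_decay_of_indicatrice_le[OF \<delta> y le[OF y]] by metis
  then obtain Cf Rf where CR: "\<And>y. y \<in> l1_simplex \<Longrightarrow> open_cone (Cf y) \<and> y \<in> Cf y \<and>
      (\<forall>i. idx_vec i \<in> Cf y \<longrightarrow> Rf y \<le> l1norm (idx_vec i) \<longrightarrow>
          f i * exp (inner (idx_vec i) u) \<le> exp (- (\<delta>/4) * l1norm (idx_vec i)))"
    by metis
  then have "l1_simplex \<subseteq> (\<Union>y\<in>l1_simplex. Cf y)" "\<And>y. y \<in> l1_simplex \<Longrightarrow> open (Cf y)"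
    by (auto simp: open_cone_def)
  then obtain Y where Y: "Y \<subseteq> l1_simplex" "finite Y" "l1_simplex \<subseteq> (\<Union>y\<in>Y. Cf y)"
    using compactE_image[OF compact_l1_simplex, of l1_simplex Cf] by blast
  define Rm where "Rm = Max (insert 0 (Rf ` Y))"
  have Rm: "Rm \<ge> 0" "\<And>y. y \<in> Y \<Longrightarrow> Rf y \<le> Rm" using Y(2) by (auto simp: Rm_def)
  have "f i * exp (inner (idx_vec i) u) \<le> exp (- (\<delta>/4) * l1norm (idx_vec i))"
    if n: "Rm < l1norm (idx_vec i)" for i
  proof -
    define n where "n = l1norm (idx_vec i)"
    have n0: "n > 0" using n Rm by (simp add: n_def)
    have "l1norm ((1/n) *\<^sub>R idx_vec i) = 1"
      using n0 by (simp add: l1norm_scaleR n_def[symmetric])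
    then have "(1/n) *\<^sub>R idx_vec i \<in> l1_simplex"
      using n0 by (simp add: l1_simplex_def idx_vec_def)
    then obtain y where y: "y \<in> Y" "(1/n) *\<^sub>R idx_vec i \<in> Cf y" using Y(3) by blast
    then have "n *\<^sub>R ((1/n) *\<^sub>R idx_vec i) \<in> Cf y"
      using CR Y(1) n0 unfolding open_cone_def by blast
    then have "idx_vec i \<in> Cf y" using n0 by simp
    moreover have "Rf y \<le> l1norm (idx_vec i)" using Rm(2)[OF y(1)] n by simp
    ultimately show ?thesis using CR[of y] Y(1) y(1) by blast
  qed
  then show ?thesis by (rule that)
qed

lemma exp_mem_domain_of_indicatrice_le:
  assumes "\<delta> > 0" "\<And>y. y \<in> l1_simplex \<Longrightarrow> psi y \<le> ereal (- inner y u - \<delta>)"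
  shows "(\<chi> j. complex_of_real (exp (u$j))) \<in> abs_conv_domain f"
proof -
  define z where "z = (\<chi> j. complex_of_real (exp (u$j)))"
  define h where "h i = f i * exp (inner (idx_vec i) u)" for i
  obtain Rm where Rm: "\<And>i. Rm < l1norm (idx_vec i) \<Longrightarrow>
      f i * exp (inner (idx_vec i) u) \<le> exp (- (\<delta>/4) * l1norm (idx_vec i))"
    using coeff_decay_of_indicatrice_le[OF assms] by blast
  have "h summable_on {i. Rm < l1norm (idx_vec i)}"
  proof (rule summable_on_comparison_test)
    show "(\<lambda>i. exp (- (\<delta>/4) * l1norm (idx_vec i))) summable_on {i. Rm < l1norm (idx_vec i)}"
      by (rule summable_on_subset_banach[OF summable_on_exp_neg_l1norm]) (use assms(1) in auto)
    show "h i \<le> exp (- (\<delta>/4) * l1norm (idx_vec i))" if "i \<in> {i. Rm < l1norm (idx_vec i)}" for i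
      using Rm[of i] that by (simp add: h_def)
  qed (simp add: h_def nonneg)
  moreover have "h summable_on {i. l1norm (idx_vec i) \<le> Rm}"
    by (rule summable_on_finite[OF finite_lattice_l1ball0])
  ultimately have "h summable_on ({i. Rm < l1norm (idx_vec i)} \<union> {i. l1norm (idx_vec i) \<le> Rm})"
    by (rule summable_on_union)
  moreover have "{i. Rm < l1norm (idx_vec i)} \<union> {i. l1norm (idx_vec i) \<le> Rm} = UNIV" by auto
  ultimately have "h summable_on UNIV" by metis
  have z0: "\<forall>j. z$j \<noteq> 0" and zln: "(\<chi> j. ln (norm (z$j))) = u"
    by (simp_all add: z_def vec_eq_iff)
  have "f i * norm (monom z i) = h i" for i
    using norm_monom_eq_exp_inner[OF z0, of i] unfolding zln h_def by simp
  with \<open>h summable_on UNIV\<close> show ?thesis by (simp add: abs_conv_domain_def z_def)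
qed

lemma neglogterm_eq:
  "(zj = 0 \<Longrightarrow> xj = 0) \<Longrightarrow> neglogterm xj zj = ereal (- xj * ln (norm zj))"
  by (simp add: neglogterm_def)

lemma indicatrice_le_neglog_sum:
  assumes x: "\<And>j. x$j \<ge> 0" and z: "z \<in> closure (interior (abs_conv_domain f))"
  shows "psi x \<le> (\<Sum>j\<in>UNIV. neglogterm (x$j) (z$j))"
proof (cases "\<exists>j. x$j > 0 \<and> z$j = 0")
  case True
  then have "(\<Sum>j\<in>UNIV. neglogterm (x$j) (z$j)) = \<infinity>"
    unfolding sum_Pinfty by (auto simp: neglogterm_def)
  then show ?thesis by simp
next
  case False
  then have x0: "z$j = 0 \<Longrightarrow> x$j = 0" for j using x[of j] by force
  define \<phi> where "\<phi> w = (\<Sum>j\<in>UNIV. - x$j * ln (norm (w$j)))" for w :: "complex^'d"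
  have sum_eq: "(\<Sum>j\<in>UNIV. neglogterm (x$j) (z$j)) = ereal (\<phi> z)"
    by (simp add: \<phi>_def neglogterm_eq x0)
  have "isCont (\<lambda>w::complex^'d. - x$j * ln (norm (w$j))) z" for j
    using x0[of j] by (cases "x$j = 0") (auto intro!: continuous_intros)
  then have "isCont \<phi> z" unfolding \<phi>_def by (rule continuous_sum)
  have "psi x \<le> ereal (\<phi> z) + ereal e" if e: "e > 0" for e
  proof -
    obtain d where d: "d > 0" "\<And>w. dist w z < d \<Longrightarrow> dist (\<phi> w) (\<phi> z) < e"
      using \<open>isCont \<phi> z\<close> e unfolding continuous_at_eps_delta by blast
    obtain w1 where w1: "w1 \<in> interior (abs_conv_domain f)" "dist w1 z < d/2"
      using z d(1) unfolding closure_approachable by (meson half_gt_zero)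
    obtain w where w: "w \<in> interior (abs_conv_domain f)" "dist w w1 < d/2" "\<forall>j. w$j \<noteq> 0"
      using exists_nonzero_components_near[OF open_interior w1(1)] d(1) by (meson half_gt_zero)
    have "dist w z < d" using w(2) w1(2) dist_triangle[of w z w1] by linarith
    then have "\<phi> w < \<phi> z + e" using d(2) by (force simp: dist_real_def abs_less_iff)
    moreover have "psi x \<le> ereal (\<phi> w)"
      using indicatrice_le_of_mem_domain[OF _ w(3)] interior_subset w(1)
      by (auto simp: \<phi>_def inner_vec_def sum_negf)
    ultimately show ?thesis by (simp add: order.trans)
  qed
  then show ?thesis unfolding sum_eq by (rule ereal_le_epsilon2)
qed

end

definition exp_ray :: "real^'d \<Rightarrow> real \<Rightarrow> complex^'d" where
  "exp_ray u s = (\<chi> j. complex_of_real (exp (u$j + s)))"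

lemma continuous_on_exp_ray: "continuous_on S (exp_ray u)"
  unfolding exp_ray_def by (intro continuous_intros)

lemma inner_add_const:
  "(\<And>j. y$j \<ge> 0) \<Longrightarrow> inner y (\<chi> j. u$j + s) = inner y u + s * l1norm y"
  by (simp add: inner_vec_def l1norm_eq_sum_of_nonneg algebra_simps sum.distrib sum_distrib_left)

lemma neglog_sum_exp_ray_le:
  assumes "\<And>j. x$j \<ge> 0" "s \<ge> 0"
  shows "(\<Sum>j\<in>UNIV. neglogterm (x$j) (exp_ray u s $ j)) \<le> ereal (- inner x u)"
proof -
  have "(\<Sum>j\<in>UNIV. neglogterm (x$j) (exp_ray u s $ j)) = ereal (- inner x (\<chi> j. u$j + s))"
    by (simp add: neglogterm_def exp_ray_def inner_vec_def sum_negf)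
  also have "\<dots> = ereal (- inner x u - s * l1norm x)" using assms(1) by (simp add: inner_add_const)
  also have "\<dots> \<le> ereal (- inner x u)" using assms(2) l1norm_nonneg[of x] by simp
  finally show ?thesis .
qed

context nonneg_power_series
begin

lemma exp_ray_in_interior:
  assumes le: "\<And>y. psi y \<le> ereal (- inner y u)" and s: "s < 0"
  shows "exp_ray u s \<in> interior (abs_conv_domain f)"
proof -
  have "(\<chi> j. complex_of_real (exp ((\<chi> j. u$j + s/2) $ j))) \<in> abs_conv_domain f"
  proof (rule exp_mem_domain_of_indicatrice_le)
    fix y :: "real^'d" assume "y \<in> l1_simplex"
    then have "inner y (\<chi> j. u$j + s/2) = inner y u + s/2"
      by (simp add: l1_simplex_def inner_add_const)
    then show "psi y \<le> ereal (- inner y (\<chi> j. u$j + s/2) - - s/2)" using le[of y] by simp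
  qed (use s in simp)
  then have half: "exp_ray u (s/2) \<in> abs_conv_domain f" by (simp add: exp_ray_def)
  define W where "W = (\<Inter>j. {w::complex^'d. norm (w$j) < exp (u$j + s/2)})"
  have "open W" unfolding W_def
    by (intro open_INT ballI open_Collect_less continuous_intros) auto
  moreover have "exp_ray u s \<in> W" using s by (simp add: W_def exp_ray_def)
  moreover have "W \<subseteq> abs_conv_domain f"
    by (auto simp: W_def exp_ray_def less_imp_le intro!: abs_conv_domain_mono[OF half])
  ultimately show ?thesis by (meson interior_maximal interior_subset subsetD)
qed

lemma exists_simplex_point_gt_minf:
  assumes "abs_conv_domain f \<noteq> UNIV"
  shows "\<exists>y\<in>l1_simplex. psi y > -\<infinity>"
proof (rule ccontr)
  assume "\<not> ?thesis"
  then have minf: "\<And>y. y \<in> l1_simplex \<Longrightarrow> psi y = -\<infinity>" by auto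
  have "z \<in> abs_conv_domain f" for z
  proof -
    define u where "u = (\<chi> j. ln (norm (z$j) + 1))"
    have "(\<chi> j. complex_of_real (exp (u$j))) \<in> abs_conv_domain f"
      by (rule exp_mem_domain_of_indicatrice_le[of 1]) (auto simp: minf)
    moreover have "norm (z$j) \<le> norm ((\<chi> j. complex_of_real (exp (u$j))) $ j)" for j
      by (simp add: u_def add_nonneg_pos)
    ultimately show ?thesis by (blast intro: abs_conv_domain_mono)
  qed
  with assms show False by auto
qed

lemma exp_ray_eventually_outside:
  assumes "abs_conv_domain f \<noteq> UNIV"
  obtains S where "\<And>s. s \<ge> S \<Longrightarrow> exp_ray u s \<notin> abs_conv_domain f"
proof -
  obtain y where y: "y \<in> l1_simplex" "psi y > -\<infinity>"
    using exists_simplex_point_gt_minf[OF assms] by blast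
  then obtain r where r: "ereal r \<le> psi y" by (metis ereal_dense2 less_imp_le)
  have "exp_ray u s \<notin> abs_conv_domain f" if s: "s \<ge> - inner y u - r + 1" for s
  proof
    assume "exp_ray u s \<in> abs_conv_domain f"
    then have "psi y \<le> ereal (- inner y (\<chi> j. ln (norm (exp_ray u s $ j))))"
      by (rule indicatrice_le_of_mem_domain) (simp add: exp_ray_def)
    also have "(\<chi> j. ln (norm (exp_ray u s $ j))) = (\<chi> j. u$j + s)"
      by (simp add: exp_ray_def vec_eq_iff)
    also have "inner y (\<chi> j. u$j + s) = inner y u + s"
      using y(1) by (simp add: l1_simplex_def inner_add_const)
    finally have "psi y \<le> ereal (- (inner y u + s))" .
    with r have "r \<le> - (inner y u + s)" by (metis ereal_less_eq(3) order.trans)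
    with s show False by linarith
  qed
  then show ?thesis using that by blast
qed

text \<open>The ray enters the interior for $s < 0$ and leaves the domain for large $s$, so by
  connectedness it crosses the frontier; it does so at some $s \ge 0$ because the frontier of an
  open set is disjoint from it.\<close>
lemma exp_ray_meets_frontier:
  assumes "abs_conv_domain f \<noteq> UNIV" and le: "\<And>y. psi y \<le> ereal (- inner y u)"
  obtains s where "s \<ge> 0" "exp_ray u s \<in> frontier (interior (abs_conv_domain f))"
proof -
  let ?I = "interior (abs_conv_domain f)"
  obtain S where S: "\<And>s. s \<ge> S \<Longrightarrow> exp_ray u s \<notin> abs_conv_domain f"
    using exp_ray_eventually_outside[OF assms(1)] by blast
  define T where "T = max S 0"
  have "connected (exp_ray u ` {-1..T})"
    by (intro connected_continuous_image continuous_on_exp_ray connected_Icc)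
  moreover have "exp_ray u (-1) \<in> exp_ray u ` {-1..T} \<inter> ?I"
    using exp_ray_in_interior[OF le] by (simp add: T_def)
  moreover have "exp_ray u T \<in> exp_ray u ` {-1..T} - ?I"
    using S[of T] interior_subset by (auto simp: T_def)
  ultimately have "exp_ray u ` {-1..T} \<inter> frontier ?I \<noteq> {}"
    by (intro connected_Int_frontier) auto
  then obtain s where s: "s \<in> {-1..T}" "exp_ray u s \<in> frontier ?I" by blast
  moreover have "s \<ge> 0"
  proof (rule ccontr)
    assume "\<not> s \<ge> 0"
    then have "exp_ray u s \<in> ?I" using exp_ray_in_interior[OF le] by simp
    with s(2) show False by (simp add: frontier_def)
  qed
  ultimately show ?thesis using that by blast
qed

text \<open>\<open>achieves x t\<close> says that, up to any relative error \<open>\<epsilon>\<close>, arbitrarily far along the ray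
  through \<open>x\<close> there are lattice points \<open>p \<approx> l x\<close> with \<open>f p \<ge> exp (l (t - \<epsilon>))\<close>; for
  \<open>x \<noteq> 0\<close> it is equivalent to \<open>t \<le> \<psi>(x)\<close>.\<close>
definition achieves :: "real^'d \<Rightarrow> real \<Rightarrow> bool" where
  "achieves x t \<longleftrightarrow> (\<forall>\<epsilon>>0. \<forall>\<Lambda>. \<exists>p l. \<Lambda> \<le> l \<and> l1norm (idx_vec p - l *\<^sub>R x) \<le> \<epsilon> * l \<and>
                        f p > 0 \<and> l * (t - \<epsilon>) \<le> ln (f p))"

lemma achieves_of_le_indicatrice:
  assumes x0: "x \<noteq> 0" and t: "ereal t \<le> psi x"
  shows "achieves x t"
  unfolding achieves_def
proof (intro allI impI)
  fix \<epsilon> \<Lambda> :: real assume \<epsilon>: "\<epsilon> > 0"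
  define X where "X = l1norm x"
  have X: "X > 0" using l1norm_pos[OF x0] by (simp add: X_def)
  define \<theta> where "\<theta> = t/X - \<epsilon>/(2*X)"
  define e where "e = min (X/2) (\<epsilon> / (4 * (\<bar>\<theta>\<bar> + 1)))"
  have e0: "e > 0" using X \<epsilon> by (simp add: e_def add_pos_nonneg)
  have eX: "e \<le> X/2" unfolding e_def by linarith
  have "e \<le> \<epsilon> / (4 * (\<bar>\<theta>\<bar> + 1))" by (simp add: e_def)
  then have "4 * (\<bar>\<theta>\<bar> * e) + 4 * e \<le> \<epsilon>"
    by (subst (asm) pos_le_divide_eq) (auto simp: algebra_simps add_pos_nonneg)
  moreover have "0 \<le> \<bar>\<theta>\<bar> * e" using e0 by simp
  ultimately have e: "e > 0" "e \<le> X/2" "\<bar>\<theta>\<bar> * e \<le> \<epsilon>/4" "e \<le> \<epsilon>"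
    using e0 eX by linarith+
  define L where "L = max (max \<Lambda> (4 * \<bar>\<theta>\<bar> / \<epsilon>)) 0"
  have "ereal \<theta> < ereal (t / X)" using \<epsilon> X by (simp add: \<theta>_def)
  also have "ereal (t / X) \<le> tau f (approx_cone x e)"
    unfolding X_def by (rule le_tau_of_le_indicatrice[OF x0 t open_cone_approx_cone mem_approx_cone[OF e(1)]])
  finally have "ereal \<theta> < tau f (approx_cone x e)" .
  from shell_witness_of_less_tau[OF this, of "2 * X * L"]
  obtain R p where R: "R \<ge> 2 * X * L" and p: "p \<in> shell (approx_cone x e) R" "f p > 0"
    "\<theta> * R \<le> ln (f p)" by blast
  from p(1) obtain l where l: "l > 0" "l1norm (idx_vec p - l *\<^sub>R x) < e * l"
    by (auto simp: shell_def approx_cone_def)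
  have pR: "R \<le> l1norm (idx_vec p)" "l1norm (idx_vec p) \<le> R + 1" using p(1) by (auto simp: shell_def)
  define m where "m = l * X"
  have "\<bar>l1norm (idx_vec p) - m\<bar> \<le> e * l"
    using l1norm_near_ray[OF less_imp_le[OF l(2)]] l(1) by (simp add: X_def m_def)
  then have dist: "\<bar>R - m\<bar> \<le> 1 + e * l" and "R \<le> m + e * l" using pR by linarith+
  have "e * l \<le> X / 2 * l" using e(2) l(1) by (intro mult_right_mono) auto
  then have "X * (2 * L) \<le> X * ((3/2) * l)"
    using R \<open>R \<le> m + e * l\<close> by (simp add: m_def algebra_simps)
  then have "2 * L \<le> (3/2) * l" using X by simp
  moreover have "L \<ge> 0" by (simp add: L_def)
  ultimately have lL: "L \<le> l" by linarith
  have "\<theta> * m - \<bar>\<theta>\<bar> * (1 + e * l) \<le> \<theta> * R"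
    using abs_mult_sub_le[OF dist, of \<theta>] by (simp add: abs_le_iff)
  moreover have "\<theta> * m = l * t - l * \<epsilon> / 2" using X by (simp add: m_def \<theta>_def field_simps)
  moreover have "\<bar>\<theta>\<bar> \<le> l * \<epsilon> / 4" using lL \<epsilon> by (simp add: L_def field_simps)
  moreover have "\<bar>\<theta>\<bar> * (e * l) \<le> \<epsilon> / 4 * l" using e(3) l by (simp add: mult.assoc[symmetric])
  ultimately have "l * (t - \<epsilon>) \<le> ln (f p)" using p(3) by (simp add: algebra_simps)
  moreover have "e * l \<le> \<epsilon> * l" using e(4) l(1) by (intro mult_right_mono) auto
  then have "l1norm (idx_vec p - l *\<^sub>R x) \<le> \<epsilon> * l" using l(2) by linarith
  moreover have "\<Lambda> \<le> l" using lL by (simp add: L_def)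
  ultimately show "\<exists>p l. \<Lambda> \<le> l \<and> l1norm (idx_vec p - l *\<^sub>R x) \<le> \<epsilon> * l \<and> f p > 0 \<and> l * (t - \<epsilon>) \<le> ln (f p)"
    using p(2) by blast
qed

lemma tau_ge_of_achieves:
  assumes x0: "x \<noteq> 0" and ach: "achieves x t" and C: "open_cone C" "x \<in> C" and \<eta>: "\<eta> > 0"
  shows "ereal (t / l1norm x - \<eta>) \<le> tau f C"
proof (rule tau_ge_of_witnesses)
  fix R0 :: real
  define X where "X = l1norm x"
  define \<theta> where "\<theta> = t / X - \<eta>"
  have X: "X > 0" using l1norm_pos[OF x0] by (simp add: X_def)
  obtain r where r: "r > 0" "\<And>w s. s > 0 \<Longrightarrow> l1norm (w - s *\<^sub>R x) < s * r \<Longrightarrow> w \<in> C"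
    using open_cone_l1_approx[OF C] by blast
  define \<epsilon> where "\<epsilon> = min (min (r/2) (X/2)) (\<eta> * X / (1 + \<bar>\<theta>\<bar>))"
  have "\<epsilon> \<le> \<eta> * X / (1 + \<bar>\<theta>\<bar>)" by (simp add: \<epsilon>_def)
  then have \<epsilon>\<theta>: "\<epsilon> * (1 + \<bar>\<theta>\<bar>) \<le> \<eta> * X"
    by (subst (asm) pos_le_divide_eq) (auto simp: add_pos_nonneg)
  have "\<epsilon> \<le> r/2" "\<epsilon> \<le> X/2" unfolding \<epsilon>_def by linarith+
  moreover have "\<epsilon> > 0" using r X \<eta> by (simp add: \<epsilon>_def add_pos_nonneg)
  ultimately have \<epsilon>: "\<epsilon> > 0" "\<epsilon> < r" "\<epsilon> \<le> X/2" using r(1) by linarith+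
  obtain p l where p: "max 1 (2 * \<bar>R0\<bar> / X) \<le> l" "l1norm (idx_vec p - l *\<^sub>R x) \<le> \<epsilon> * l"
    "f p > 0" "l * (t - \<epsilon>) \<le> ln (f p)"
    using ach \<epsilon>(1) unfolding achieves_def by blast
  have l: "l > 0" "\<bar>R0\<bar> \<le> l * X / 2" using p(1) X by (auto simp: field_simps)
  have near: "\<bar>l1norm (idx_vec p) - l * X\<bar> \<le> \<epsilon> * l"
    using l1norm_near_ray[OF p(2)] l(1) by (simp add: X_def)
  have "\<epsilon> * l < r * l" using \<epsilon>(2) l(1) by simp
  then have "idx_vec p \<in> C" using r(2)[OF l(1)] p(2) by (simp add: mult.commute)
  moreover have "R0 \<le> l1norm (idx_vec p)"
  proof -
    have "l * (X/2) \<le> l * (X - \<epsilon>)" by (intro mult_left_mono) (use \<epsilon>(3) l(1) in auto)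
    then have "l * X / 2 \<le> l * X - \<epsilon> * l" by (simp add: algebra_simps)
    moreover have "l * X - \<epsilon> * l \<le> l1norm (idx_vec p)" using near by (simp add: abs_le_iff)
    ultimately show ?thesis using l(2) abs_ge_self[of R0] by linarith
  qed
  moreover have "\<theta> * l1norm (idx_vec p) \<le> ln (f p)"
  proof -
    have "\<theta> * l1norm (idx_vec p) \<le> \<theta> * (l * X) + \<bar>\<theta>\<bar> * (\<epsilon> * l)"
      using abs_mult_sub_le[OF near, of \<theta>] by (simp add: abs_le_iff)
    also have "\<dots> \<le> l * (t - \<epsilon>)"
    proof -
      have "l * (\<epsilon> * (1 + \<bar>\<theta>\<bar>)) \<le> l * (\<eta> * X)" using \<epsilon>\<theta> l(1) by (intro mult_left_mono) auto
      then show ?thesis using X by (simp add: \<theta>_def field_simps)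
    qed
    finally show ?thesis using p(4) by linarith
  qed
  ultimately show "\<exists>i. idx_vec i \<in> C \<and> R0 \<le> l1norm (idx_vec i) \<and> f i > 0 \<and>
                      (t / l1norm x - \<eta>) * l1norm (idx_vec i) \<le> ln (f i)"
    using p(3) unfolding \<theta>_def X_def by blast
qed

lemma le_indicatrice_of_achieves:
  assumes x0: "x \<noteq> 0" and ach: "achieves x t"
  shows "ereal t \<le> psi x"
proof -
  have "ereal (t / l1norm x) \<le> tau f C" if "open_cone C" "x \<in> C" for C
  proof (rule ereal_le_epsilon2)
    fix \<eta> :: real assume "\<eta> > 0"
    from tau_ge_of_achieves[OF x0 ach that this]
    show "ereal (t / l1norm x) \<le> tau f C + ereal \<eta>" by (cases "tau f C") auto
  qed
  from le_indicatrice_of_le_tau[OF x0 this] show ?thesis using l1norm_pos[OF x0] by simp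
qed

end

section \<open>Superadditivity of the indicatrice under (CG)\<close>

lemma exists_multiples_close:
  fixes l m S :: real
  assumes "l > 0" "m > 0"
  obtains k N :: nat where "k \<ge> 1" "N \<ge> 1" "S \<le> real N * m"
    "real N * m - l < real k * l" "real k * l \<le> real N * m"
proof -
  define N where "N = nat \<lceil>max S l / m\<rceil>"
  have "max S l / m \<le> real N" unfolding N_def by (rule real_nat_ceiling_ge)
  then have NT: "max S l \<le> real N * m" using assms by (simp add: field_simps)
  then have N1: "N \<ge> 1" using assms by (cases N) auto
  define k where "k = nat \<lfloor>real N * m / l\<rfloor>"
  have "1 \<le> real N * m / l" using NT assms by (simp add: field_simps)
  then have "real k \<le> real N * m / l" "real N * m / l < real k + 1" and k1: "k \<ge> 1"
    by (simp_all add: k_def le_nat_iff)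
  then have "real k * l \<le> real N * m" "real N * m - l < real k * l"
    using assms by (simp_all add: field_simps)
  with N1 k1 NT that show ?thesis by simp
qed

lemma mult_le_of_mult_bound:
  fixes n A L \<delta> s :: real
  assumes "2 * A \<le> \<delta> * L" "n * L \<le> 2 * s" "n \<ge> 0" "\<delta> \<ge> 0"
  shows "n * A \<le> \<delta> * s"
proof -
  have "n * (2 * A) \<le> n * (\<delta> * L)" using assms(1,3) by (rule mult_left_mono)
  also have "\<dots> = \<delta> * (n * L)" by simp
  also have "\<dots> \<le> \<delta> * (2 * s)" using assms(2,4) by (rule mult_left_mono)
  finally show ?thesis by simp
qed

lemma l1norm_combination_le:
  fixes w p q x y :: "real^'d" and k N :: real
  assumes "k \<ge> 0" "N \<ge> 0" "N * m = s" "\<bar>k * l - s\<bar> \<le> l" "k * l \<le> s" "l * l1norm x \<le> \<delta> * s"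
    and "l1norm (w - (k *\<^sub>R p + N *\<^sub>R q)) \<le> A"
    and "l1norm (p - l *\<^sub>R x) \<le> \<delta> * l" "l1norm (q - m *\<^sub>R y) \<le> \<delta> * m" "\<delta> \<ge> 0"
  shows "l1norm (w - s *\<^sub>R (x + y)) \<le> A + (\<delta> * s + (\<delta> * s + \<delta> * s))"
proof -
  have "w - s *\<^sub>R (x + y) = (w - (k *\<^sub>R p + N *\<^sub>R q)) +
      (k *\<^sub>R (p - l *\<^sub>R x) + ((k * l - s) *\<^sub>R x + N *\<^sub>R (q - m *\<^sub>R y)))"
    using assms(3) by (simp add: algebra_simps)
  moreover have "l1norm (k *\<^sub>R (p - l *\<^sub>R x)) \<le> \<delta> * s"
  proof -
    have "l1norm (k *\<^sub>R (p - l *\<^sub>R x)) \<le> k * (\<delta> * l)"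
      unfolding l1norm_scaleR using assms(1,8) by (simp add: mult_left_mono)
    also have "\<dots> \<le> \<delta> * s" using assms(5,10) by (simp add: mult_left_mono mult.left_commute)
    finally show ?thesis .
  qed
  moreover have "l1norm ((k * l - s) *\<^sub>R x) \<le> \<delta> * s"
    using mult_right_mono[OF assms(4) l1norm_nonneg[of x]] assms(6) by (simp add: l1norm_scaleR)
  moreover have "l1norm (N *\<^sub>R (q - m *\<^sub>R y)) \<le> \<delta> * s"
  proof -
    have "l1norm (N *\<^sub>R (q - m *\<^sub>R y)) \<le> N * (\<delta> * m)"
      unfolding l1norm_scaleR using assms(2,9) by (simp add: mult_left_mono)
    also have "N * (\<delta> * m) = \<delta> * s" using assms(3) by (metis mult.left_commute)
    finally show ?thesis .
  qed
  ultimately show ?thesis using assms(7) by (metis l1norm_le_of_split)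
qed

locale cg_power_series = nonneg_power_series f for f :: "nat^'d \<Rightarrow> real" +
  fixes a b c :: real
  assumes a_pos: "a > 0" and b_pos: "b > 0" and c_pos: "c > 0"
    and CG: "\<And>x y. nu_ball f (x + y) a \<ge> c * nu_ball f x b * nu_ball f y b"
begin

text \<open>The ball of radius \<open>a\<close> has at most \<open>(\<lfloor>2a\<rfloor> + 1)^d\<close> lattice points, so (CG) forces one of
  them to carry a coefficient of size at least \<open>cg_const * f p * f q\<close>.\<close>
definition cg_const :: real where
  "cg_const = min 1 (c / real ((nat \<lfloor>2*a\<rfloor> + 1) ^ CARD('d)))"

lemma cg_const: "cg_const > 0" "ln cg_const \<le> 0"
  using c_pos by (auto simp: cg_const_def)

lemma coeff_le_nu_ball: "r \<ge> 0 \<Longrightarrow> f p \<le> nu_ball f (idx_vec p) r"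
  unfolding nu_ball_def by (rule member_le_sum) (auto simp: nonneg finite_lattice_l1ball)

lemma exists_coeff_near_sum:
  assumes p: "f p > 0" and q: "f q > 0"
  shows "\<exists>w. l1norm (idx_vec w - (idx_vec p + idx_vec q)) \<le> a \<and> f w > 0 \<and>
             ln cg_const + ln (f p) + ln (f q) \<le> ln (f w)"
proof -
  define S where "S = {i::nat^'d. l1norm (idx_vec i - (idx_vec p + idx_vec q)) \<le> a}"
  define Lc where "Lc = real ((nat \<lfloor>2*a\<rfloor> + 1) ^ CARD('d))"
  have Lc: "Lc \<ge> 1" by (simp add: Lc_def)
  have "c * f p * f q \<le> c * nu_ball f (idx_vec p) b * nu_ball f (idx_vec q) b"
    using coeff_le_nu_ball[of b p] coeff_le_nu_ball[of b q] c_pos b_pos p q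
    by (intro mult_mono mult_left_mono) auto
  also have "\<dots> \<le> sum f S" using CG[of "idx_vec p" "idx_vec q"] by (simp add: nu_ball_def S_def)
  finally have sumS: "c * f p * f q \<le> sum f S" .
  moreover have "c * f p * f q > 0" using c_pos p q by simp
  ultimately have "S \<noteq> {}" by auto
  then obtain w where w: "w \<in> S" "sum f S \<le> real (card S) * f w"
    using exists_sum_le_card_mult[of S f] finite_lattice_l1ball by (auto simp: S_def)
  have "real (card S) \<le> Lc"
    unfolding S_def Lc_def using card_lattice_l1ball of_nat_le_iff by blast
  have "c * (f p * f q) \<le> sum f S" using sumS by (simp add: ac_simps)
  also have "\<dots> \<le> real (card S) * f w" by (rule w(2))
  also have "\<dots> \<le> Lc * f w" by (rule mult_right_mono[OF \<open>real (card S) \<le> Lc\<close> nonneg])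
  finally have "c * (f p * f q) \<le> f w * Lc" by (simp add: mult.commute)
  then have "c * (f p * f q) / Lc \<le> f w" using Lc by (simp add: pos_divide_le_eq)
  moreover have "cg_const * (f p * f q) \<le> c / Lc * (f p * f q)"
    using p q by (intro mult_right_mono) (simp_all add: cg_const_def Lc_def)
  ultimately have "cg_const * (f p * f q) \<le> f w" by simp
  moreover have pos: "cg_const * (f p * f q) > 0" using cg_const p q by simp
  ultimately have "ln (cg_const * (f p * f q)) \<le> ln (f w)" "f w > 0" by simp_all
  moreover have "ln (cg_const * (f p * f q)) = ln cg_const + ln (f p) + ln (f q)"
    using cg_const p q by (simp add: ln_mult)
  ultimately show ?thesis using w(1) unfolding S_def by auto
qed

lemma exists_coeff_near_multiple:
  assumes p: "f p > 0" and k: "k \<ge> 1"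
  shows "\<exists>w. l1norm (idx_vec w - real k *\<^sub>R idx_vec p) \<le> (real k - 1) * a \<and> f w > 0 \<and>
             real k * ln (f p) + (real k - 1) * ln cg_const \<le> ln (f w)"
  using k
proof (induction k rule: dec_induct)
  case (step k)
  then obtain w where w: "l1norm (idx_vec w - real k *\<^sub>R idx_vec p) \<le> (real k - 1) * a" "f w > 0"
    "real k * ln (f p) + (real k - 1) * ln cg_const \<le> ln (f w)" by blast
  obtain w' where w': "l1norm (idx_vec w' - (idx_vec w + idx_vec p)) \<le> a" "f w' > 0"
    "ln cg_const + ln (f w) + ln (f p) \<le> ln (f w')"
    using exists_coeff_near_sum[OF w(2) p] by blast
  have "idx_vec w' - real (Suc k) *\<^sub>R idx_vec p =
      (idx_vec w' - (idx_vec w + idx_vec p)) + (idx_vec w - real k *\<^sub>R idx_vec p)"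
    by (simp add: algebra_simps)
  then have "l1norm (idx_vec w' - real (Suc k) *\<^sub>R idx_vec p) \<le> a + (real k - 1) * a"
    using w'(1) w(1) by (rule l1norm_le_of_split)
  moreover have "a + (real k - 1) * a = (real (Suc k) - 1) * a" by (simp add: algebra_simps)
  moreover have "real (Suc k) * ln (f p) + (real (Suc k) - 1) * ln cg_const \<le> ln (f w')"
    using w(3) w'(3) by (simp add: algebra_simps)
  ultimately show ?case using w'(2) by auto
qed (use p in \<open>intro exI[of _ p], simp\<close>)

lemma exists_coeff_near_combination:
  assumes p: "f p > 0" and q: "f q > 0" and k: "k \<ge> 1" and N: "N \<ge> 1"
  shows "\<exists>w. l1norm (idx_vec w - (real k *\<^sub>R idx_vec p + real N *\<^sub>R idx_vec q)) \<le> (real k + real N) * a \<and>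
             f w > 0 \<and> real k * ln (f p) + real N * ln (f q) + (real k + real N) * ln cg_const \<le> ln (f w)"
proof -
  obtain w1 where w1: "l1norm (idx_vec w1 - real k *\<^sub>R idx_vec p) \<le> (real k - 1) * a" "f w1 > 0"
    "real k * ln (f p) + (real k - 1) * ln cg_const \<le> ln (f w1)"
    using exists_coeff_near_multiple[OF p k] by blast
  obtain w2 where w2: "l1norm (idx_vec w2 - real N *\<^sub>R idx_vec q) \<le> (real N - 1) * a" "f w2 > 0"
    "real N * ln (f q) + (real N - 1) * ln cg_const \<le> ln (f w2)"
    using exists_coeff_near_multiple[OF q N] by blast
  obtain w where w: "l1norm (idx_vec w - (idx_vec w1 + idx_vec w2)) \<le> a" "f w > 0"
    "ln cg_const + ln (f w1) + ln (f w2) \<le> ln (f w)"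
    using exists_coeff_near_sum[OF w1(2) w2(2)] by blast
  have "idx_vec w - (real k *\<^sub>R idx_vec p + real N *\<^sub>R idx_vec q) =
      (idx_vec w - (idx_vec w1 + idx_vec w2)) +
      ((idx_vec w1 - real k *\<^sub>R idx_vec p) + (idx_vec w2 - real N *\<^sub>R idx_vec q))"
    by (simp add: algebra_simps)
  then have "l1norm (idx_vec w - (real k *\<^sub>R idx_vec p + real N *\<^sub>R idx_vec q)) \<le>
      a + ((real k - 1) * a + (real N - 1) * a)"
    using w(1) l1norm_le_of_split[OF refl w1(1) w2(1)] by (rule l1norm_le_of_split)
  also have "\<dots> \<le> (real k + real N) * a" using a_pos by (simp add: algebra_simps)
  finally have "l1norm (idx_vec w - (real k *\<^sub>R idx_vec p + real N *\<^sub>R idx_vec q)) \<le> (real k + real N) * a" .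
  moreover have "real k * ln (f p) + real N * ln (f q) + (real k + real N) * ln cg_const \<le> ln (f w)"
    using w(3) w1(3) w2(3) cg_const(2) by (simp add: algebra_simps)
  ultimately show ?thesis using w(2) by blast
qed

text \<open>Concatenating \<open>k\<close> copies of a witness for \<open>x\<close> and \<open>N\<close> copies of one for \<open>y\<close>, with
  \<open>k l \<approx> N m\<close>, produces a witness for \<open>x + y\<close>; the losses \<open>(k + N) a\<close> and \<open>(k + N) ln cg_const\<close>
  are linear in the number of copies and hence negligible once \<open>l, m \<ge> L\<close> are large.\<close>
lemma combine_ray_witnesses:
  assumes \<delta>: "\<delta> > 0" and L: "L \<ge> 1" "2 * a \<le> \<delta> * L" "2 * \<bar>ln cg_const\<bar> \<le> \<delta> * L"
    and p: "L \<le> l" "l1norm (idx_vec p - l *\<^sub>R x) \<le> \<delta> * l" "f p > 0" "l * (t1 - \<delta>) \<le> ln (f p)"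
    and q: "L \<le> m" "l1norm (idx_vec q - m *\<^sub>R y) \<le> \<delta> * m" "f q > 0" "m * (t2 - \<delta>) \<le> ln (f q)"
  shows "\<exists>w s. \<Lambda> \<le> s \<and> l1norm (idx_vec w - s *\<^sub>R (x + y)) \<le> 4 * \<delta> * s \<and> f w > 0 \<and>
               s * (t1 + t2 - 4 * \<delta>) \<le> ln (f w)"
proof -
  have l0: "l > 0" "m > 0" using p(1) q(1) L(1) by linarith+
  obtain k N :: nat where kN: "k \<ge> 1" "N \<ge> 1"
    "max \<Lambda> (l * (l1norm x + \<bar>t1 - \<delta>\<bar>) / \<delta>) \<le> real N * m"
    "real N * m - l < real k * l" "real k * l \<le> real N * m"
    using exists_multiples_close[OF l0] by blast
  define s where "s = real N * m"
  have "l * (l1norm x + \<bar>t1 - \<delta>\<bar>) / \<delta> \<le> s" using kN(3) by (simp add: s_def)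
  then have "l * l1norm x + l * \<bar>t1 - \<delta>\<bar> \<le> \<delta> * s" using \<delta> by (simp add: field_simps)
  moreover have "0 \<le> l * l1norm x" "0 \<le> l * \<bar>t1 - \<delta>\<bar>" using l0 by (simp_all add: l1norm_nonneg)
  ultimately have "l * l1norm x \<le> \<delta> * s" "l * \<bar>t1 - \<delta>\<bar> \<le> \<delta> * s" by linarith+
  moreover have "\<Lambda> \<le> s" "\<bar>real k * l - s\<bar> \<le> l" using kN(3-5) by (auto simp: s_def)
  ultimately have s: "\<Lambda> \<le> s" "l * l1norm x \<le> \<delta> * s" "l * \<bar>t1 - \<delta>\<bar> \<le> \<delta> * s" "\<bar>real k * l - s\<bar> \<le> l"
    by blast+
  have kNL: "(real k + real N) * L \<le> 2 * s"
    using mult_left_mono[OF p(1), of "real k"] mult_left_mono[OF q(1), of "real N"] kN(5)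
    by (simp add: s_def algebra_simps)
  have losses: "(real k + real N) * a \<le> \<delta> * s" "- (\<delta> * s) \<le> (real k + real N) * ln cg_const"
    using mult_le_of_mult_bound[OF L(2) kNL] mult_le_of_mult_bound[OF L(3) kNL] \<delta> cg_const(2)
    by (simp_all add: abs_if split: if_splits)
  obtain w where w: "l1norm (idx_vec w - (real k *\<^sub>R idx_vec p + real N *\<^sub>R idx_vec q)) \<le> (real k + real N) * a"
    "f w > 0" "real k * ln (f p) + real N * ln (f q) + (real k + real N) * ln cg_const \<le> ln (f w)"
    using exists_coeff_near_combination[OF p(3) q(3) kN(1,2)] by blast
  have "l1norm (idx_vec w - s *\<^sub>R (x + y)) \<le> \<delta> * s + (\<delta> * s + (\<delta> * s + \<delta> * s))"
    using w(1) losses(1) \<delta> s(2,4) kN(5) p(2) q(2)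
    by (intro l1norm_combination_le[of "real k" "real N" m s]) (auto simp: s_def)
  then have position: "l1norm (idx_vec w - s *\<^sub>R (x + y)) \<le> 4 * \<delta> * s" by simp
  have "s * (t1 - \<delta>) - \<delta> * s \<le> real k * ln (f p)"
  proof -
    have "\<bar>(t1 - \<delta>) * (real k * l) - (t1 - \<delta>) * s\<bar> \<le> \<bar>t1 - \<delta>\<bar> * l" by (rule abs_mult_sub_le[OF s(4)])
    moreover have "real k * (l * (t1 - \<delta>)) \<le> real k * ln (f p)" using p(4) by (simp add: mult_left_mono)
    ultimately show ?thesis using s(3) by (simp add: abs_le_iff algebra_simps)
  qed
  moreover have "s * (t2 - \<delta>) \<le> real N * ln (f q)"
    using mult_left_mono[OF q(4), of "real N"] by (simp add: s_def algebra_simps)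
  moreover have "s * (t1 + t2 - 4 * \<delta>) = (s * (t1 - \<delta>) - \<delta> * s) + s * (t2 - \<delta>) - \<delta> * s"
    by (simp add: algebra_simps)
  ultimately have "s * (t1 + t2 - 4 * \<delta>) \<le> ln (f w)" using w(3) losses(2) by linarith
  with position w(2) s(1) show ?thesis by blast
qed

lemma achieves_add:
  assumes "achieves x t1" "achieves y t2"
  shows "achieves (x + y) (t1 + t2)"
  unfolding achieves_def
proof (intro allI impI)
  fix \<epsilon> \<Lambda> :: real assume \<epsilon>: "\<epsilon> > 0"
  define \<delta> where "\<delta> = \<epsilon> / 4"
  define L where "L = max 1 (max (2 * a / \<delta>) (2 * \<bar>ln cg_const\<bar> / \<delta>))"
  have \<delta>: "\<delta> > 0" using \<epsilon> by (simp add: \<delta>_def)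
  have "1 \<le> L" "2 * a / \<delta> \<le> L" "2 * \<bar>ln cg_const\<bar> / \<delta> \<le> L" unfolding L_def by linarith+
  then have L: "L \<ge> 1" "2 * a \<le> \<delta> * L" "2 * \<bar>ln cg_const\<bar> \<le> \<delta> * L"
    using \<delta> by (simp_all add: pos_divide_le_eq mult.commute)
  obtain p l where "L \<le> l" "l1norm (idx_vec p - l *\<^sub>R x) \<le> \<delta> * l" "f p > 0" "l * (t1 - \<delta>) \<le> ln (f p)"
    using assms(1) \<delta> unfolding achieves_def by blast
  moreover obtain q m where "L \<le> m" "l1norm (idx_vec q - m *\<^sub>R y) \<le> \<delta> * m" "f q > 0" "m * (t2 - \<delta>) \<le> ln (f q)"
    using assms(2) \<delta> unfolding achieves_def by blast
  ultimately show "\<exists>w s. \<Lambda> \<le> s \<and> l1norm (idx_vec w - s *\<^sub>R (x + y)) \<le> \<epsilon> * s \<and> f w > 0 \<and>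
                       s * (t1 + t2 - \<epsilon>) \<le> ln (f w)"
    using combine_ray_witnesses[OF \<delta> L] by (simp add: \<delta>_def)
qed

lemma indicatrice_superadditive:
  assumes x: "ereal t1 \<le> psi x" and y: "ereal t2 \<le> psi y"
  shows "ereal (t1 + t2) \<le> psi (x + y)"
proof (cases "x = 0 \<or> y = 0")
  case True
  then show ?thesis
  proof
    assume "x = 0"
    then have "ereal (t1 + t2) \<le> ereal t2" using x by (simp add: zero_ereal_def)
    also note y
    finally show ?thesis using \<open>x = 0\<close> by simp
  next
    assume "y = 0"
    then have "ereal (t1 + t2) \<le> ereal t1" using y by (simp add: zero_ereal_def)
    also note x
    finally show ?thesis using \<open>y = 0\<close> by simp
  qed
next
  case False
  then have x0: "x \<noteq> 0" and y0: "y \<noteq> 0" by auto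
  have "-\<infinity> < psi x" "-\<infinity> < psi y"
    using x y by (auto intro: less_le_trans[rotated])
  then have nonneg_xy: "x$j \<ge> 0" "y$j \<ge> 0" for j
    by (auto intro: nonneg_of_indicatrice_gt_minf)
  from x0 obtain j where "x$j \<noteq> 0" by (auto simp: vec_eq_iff)
  then have "(x + y)$j > 0" using nonneg_xy[of j] by simp
  then have "x + y \<noteq> 0" by (metis less_irrefl zero_index)
  then show ?thesis
    by (rule le_indicatrice_of_achieves[OF _ achieves_add[OF achieves_of_le_indicatrice[OF x0 x]
          achieves_of_le_indicatrice[OF y0 y]]])
qed

end

section \<open>Duality\<close>

locale bounded_power_series = nonneg_power_series f for f :: "nat^'d \<Rightarrow> real" +
  assumes bounded_indicatrice: "(SUP x\<in>{x. l1norm x = 1}. indicatrice f x) < \<infinity>"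
begin

lemma indicatrice_le_linear:
  obtains m where "m \<ge> 0" "\<And>y. psi y \<le> ereal (m * l1norm y)"
proof -
  obtain m where m: "m \<ge> 0" "(SUP x\<in>{x. l1norm x = 1}. psi x) \<le> ereal m"
  proof (cases "SUP x\<in>{x. l1norm x = 1}. psi x")
    case (real r)
    then show ?thesis using that[of "max r 0"] by simp
  qed (use bounded_indicatrice that[of 0] in auto)
  have "psi y \<le> ereal (m * l1norm y)" for y
  proof (cases "y = 0")
    case False
    define l where "l = l1norm y"
    have l: "l > 0" using l1norm_pos[OF False] by (simp add: l_def)
    have "l1norm ((1/l) *\<^sub>R y) = 1" using l by (simp add: l1norm_scaleR l_def)
    then have "psi ((1/l) *\<^sub>R y) \<le> ereal m" using m(2) by (metis (mono_tags) SUP_upper mem_Collect_eq order.trans)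
    then have "ereal l * psi ((1/l) *\<^sub>R y) \<le> ereal l * ereal m" using l by (intro ereal_mult_left_mono) auto
    moreover have "psi y = ereal l * psi ((1/l) *\<^sub>R y)"
      using indicatrice_scaleR[OF l, of "(1/l) *\<^sub>R y"] l by simp
    ultimately show ?thesis by (simp add: l_def mult.commute)
  qed simp
  with m(1) show ?thesis by (rule that)
qed

lemma indicatrice_less_top: "psi y < \<infinity>"
proof -
  obtain m where "psi y \<le> ereal (m * l1norm y)" using indicatrice_le_linear by metis
  then show ?thesis by (cases "psi y") auto
qed

lemma indicatrice_upper_semicontinuous:
  assumes "psi y < ereal c"
  obtains N where "open N" "y \<in> N" "\<And>y'. y' \<in> N \<Longrightarrow> psi y' < ereal c"
proof (cases "y = 0")
  case True
  then have c: "c > 0" using assms by (simp add: zero_ereal_def)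
  obtain m where m: "m \<ge> 0" "\<And>y. psi y \<le> ereal (m * l1norm y)" using indicatrice_le_linear by blast
  have "psi y' < ereal c" if "l1norm y' < c / (m + 1)" for y'
  proof -
    have "m * l1norm y' \<le> m * (c / (m + 1))" using that m(1) by (intro mult_left_mono) auto
    also have "\<dots> < c" using m(1) c by (simp add: field_simps)
    finally show ?thesis using m(2)[of y'] by (simp add: le_less_trans)
  qed
  moreover have "open {y'. l1norm y' < c / (m + 1)}" by (intro open_Collect_less continuous_intros)
  moreover have "y \<in> {y'. l1norm y' < c / (m + 1)}" using True c m(1) by simp
  ultimately show ?thesis using that by blast
next
  case False
  obtain C where C: "open_cone C" "y \<in> C" "ereal (l1norm y) * tau f C < ereal c"
    using exists_cone_of_indicatrice_less[OF False assms] by blast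
  have le: "psi y' \<le> ereal (l1norm y') * tau f C" if "y' \<in> C - {0}" for y'
    using indicatrice_le_tau C(1) that by blast
  show ?thesis
  proof (cases "tau f C")
    case MInf
    have "open (C - {0})" using C(1) by (auto simp: open_cone_def)
    moreover have "psi y' < ereal c" if "y' \<in> C - {0}" for y'
      using le[OF that] MInf l1norm_pos[of y'] that by simp
    ultimately show ?thesis using that False C(2) by blast
  next
    case (real \<tau>)
    define N where "N = (C - {0}) \<inter> {w. l1norm w * \<tau> < c}"
    have "open N" using C(1) unfolding N_def open_cone_def
      by (intro open_Int open_Diff open_Collect_less continuous_intros) auto
    moreover have "y \<in> N" using C False real by (simp add: N_def)
    moreover have "psi y' < ereal c" if "y' \<in> N" for y'
      using le[of y'] that real by (auto simp: N_def le_less_trans)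
    ultimately show ?thesis using that by blast
  qed (use C(3) l1norm_pos[OF False] in simp)
qed

definition hypograph :: "((real^'d) \<times> real) set" where
  "hypograph = {(y, t). ereal t \<le> psi y}"

lemma closed_hypograph: "closed hypograph"
  unfolding closed_def
proof (subst open_subopen, intro ballI)
  fix p assume "p \<in> - hypograph"
  then obtain y t where p: "p = (y, t)" "psi y < ereal t" by (cases p) (auto simp: hypograph_def)
  obtain c where c: "psi y < ereal c" "c < t"
    using ereal_dense2[OF p(2)] by (metis ereal_dense2 ereal_less(2) less_ereal.simps(1))
  obtain N where N: "open N" "y \<in> N" "\<And>y'. y' \<in> N \<Longrightarrow> psi y' < ereal c"
    using indicatrice_upper_semicontinuous[OF c(1)] by blast
  have "N \<times> {c<..} \<subseteq> - hypograph"
  proof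
    fix q assume "q \<in> N \<times> {c<..}"
    then obtain y' s where q: "q = (y', s)" "y' \<in> N" "c < s" by auto
    have "psi y' < ereal c" using N(3) q(2) by blast
    also have "ereal c < ereal s" using q(3) by simp
    finally show "q \<in> - hypograph" using q(1) by (auto simp: hypograph_def)
  qed
  moreover have "open (N \<times> {c<..})" using N(1) by (intro open_Times) auto
  moreover have "p \<in> N \<times> {c<..}" using p N(2) c(2) by simp
  ultimately show "\<exists>T. open T \<and> p \<in> T \<and> T \<subseteq> - hypograph" by blast
qed

end

locale cg_bounded_power_series =
  cg_power_series f a b c + bounded_power_series f for f :: "nat^'d \<Rightarrow> real" and a b c :: real
begin

lemma convex_hypograph: "convex hypograph"
  unfolding convex_def
proof (clarsimp simp: hypograph_def)
  fix t1 t2 u v :: real and y1 y2 :: "real^'d"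
  assume "ereal t1 \<le> psi y1" "ereal t2 \<le> psi y2" "0 \<le> u" "0 \<le> v" "u + v = 1"
  then show "ereal (u * t1 + v * t2) \<le> psi (u *\<^sub>R y1 + v *\<^sub>R y2)"
    by (intro indicatrice_superadditive le_indicatrice_scaleR)
qed

lemma hypograph_separation:
  assumes "\<not> ereal t0 \<le> psi y0"
  shows "\<exists>v \<alpha>. \<alpha> \<le> 0 \<and> inner v y0 + \<alpha> * t0 < 0 \<and>
           (\<forall>y t. ereal t \<le> psi y \<longrightarrow> 0 \<le> inner v y + \<alpha> * t)"
proof -
  have "(y0, t0) \<notin> hypograph" using assms by (simp add: hypograph_def)
  from separating_hyperplane_closed_point[OF convex_hypograph closed_hypograph this]
  obtain A B where AB: "inner A (y0, t0) < B" "\<And>k. k \<in> hypograph \<Longrightarrow> inner A k > B" by blast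
  obtain v \<alpha> where A: "A = (v, \<alpha>)" by (cases A)
  have above: "inner v y + \<alpha> * t > B" if "ereal t \<le> psi y" for y t
    using AB(2)[of "(y, t)"] that by (simp add: hypograph_def A inner_Pair)
  have B: "B < 0" using above[of 0 0] by simp
  \<comment> \<open>The hypograph is a cone, so the affine bound \<open>> B\<close> improves to \<open>\<ge> 0\<close>.\<close>
  have nonneg_side: "0 \<le> inner v y + \<alpha> * t" if yt: "ereal t \<le> psi y" for y t
  proof (rule ccontr)
    define d where "d = inner v y + \<alpha> * t"
    assume "\<not> 0 \<le> inner v y + \<alpha> * t"
    then have d: "d < 0" by (simp add: d_def)
    define s where "s = 2 * B / d"
    have s: "s > 0" using d B by (simp add: s_def divide_neg_neg)
    have "B < inner v (s *\<^sub>R y) + \<alpha> * (s * t)"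
      using above[OF le_indicatrice_scaleR[OF yt less_imp_le[OF s]]] .
    also have "\<dots> = s * d" by (simp add: d_def algebra_simps)
    also have "\<dots> = 2 * B" using d by (simp add: s_def)
    finally show False using B by simp
  qed
  have "\<alpha> \<le> 0" using nonneg_side[of "-1" 0] by simp
  moreover have "inner v y0 + \<alpha> * t0 < 0" using AB(1) B by (simp add: A inner_Pair)
  ultimately show ?thesis using nonneg_side by blast
qed

lemma indicatrice_le_of_separation:
  assumes "\<alpha> < 0" and sep: "\<And>y t. ereal t \<le> psi y \<Longrightarrow> 0 \<le> inner v y + \<alpha> * t"
  shows "psi y \<le> ereal (- inner y ((1/\<alpha>) *\<^sub>R v))"
proof (cases "psi y")
  case (real t)
  then have "0 \<le> inner v y + \<alpha> * t" using sep by simp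
  then have "t \<le> - inner y ((1/\<alpha>) *\<^sub>R v)" using assms(1) by (simp add: field_simps inner_commute)
  then show ?thesis using real by simp
qed (use indicatrice_less_top[of y] in auto)

lemma exists_linear_majorant:
  obtains u where "\<And>y. psi y \<le> ereal (- inner y u)"
proof -
  obtain v \<alpha> where "\<alpha> \<le> 0" "inner v 0 + \<alpha> * 1 < 0"
    "\<And>y t. ereal t \<le> psi y \<Longrightarrow> 0 \<le> inner v y + \<alpha> * t"
    using hypograph_separation[of 1 0] by force
  then have "psi y \<le> ereal (- inner y ((1/\<alpha>) *\<^sub>R v))" for y
    by (intro indicatrice_le_of_separation) auto
  then show ?thesis by (rule that)
qed

text \<open>A vertical separating hyperplane (\<open>\<alpha> = 0\<close>) is tilted by adding a large multiple of
  its normal to a non-vertical one.\<close>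
lemma indicatrice_dual:
  assumes "psi x < ereal r"
  obtains u where "\<And>y. psi y \<le> ereal (- inner y u)" "- inner x u < r"
proof -
  obtain u0 where u0: "\<And>y. psi y \<le> ereal (- inner y u0)" using exists_linear_majorant by blast
  have "\<not> ereal r \<le> psi x" using assms by simp
  then obtain v \<alpha> where s: "\<alpha> \<le> 0" "inner v x + \<alpha> * r < 0"
    "\<And>y t. ereal t \<le> psi y \<Longrightarrow> 0 \<le> inner v y + \<alpha> * t"
    using hypograph_separation by blast
  show ?thesis
  proof (cases "\<alpha> = 0")
    case False
    then have "\<alpha> < 0" using s(1) by simp
    then show ?thesis
      using that[of "(1/\<alpha>) *\<^sub>R v"] indicatrice_le_of_separation[OF _ s(3)] s(2)
      by (simp add: inner_commute field_simps)
  next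
    case True
    have vx: "inner v x < 0" using s(2) True by simp
    define l where "l = (\<bar>inner x u0\<bar> + \<bar>r\<bar> + 1) / (- inner v x)"
    have l: "l > 0" unfolding l_def by (rule divide_pos_pos) (use vx in auto)
    have "psi y \<le> ereal (- inner y (u0 - l *\<^sub>R v))" for y
    proof (cases "psi y")
      case (real t)
      then have "inner v y \<ge> 0" using s(3)[of t y] True by simp
      then have "- inner y u0 \<le> - inner y (u0 - l *\<^sub>R v)"
        using l by (simp add: inner_diff_right inner_commute)
      then show ?thesis using u0[of y] by (simp add: le_ereal_le)
    qed (use indicatrice_less_top[of y] in auto)
    moreover have "- inner x (u0 - l *\<^sub>R v) < r"
    proof -
      have "l * inner v x = - (\<bar>inner x u0\<bar> + \<bar>r\<bar> + 1)" using vx by (simp add: l_def)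
      then have "- inner x (u0 - l *\<^sub>R v) = - inner x u0 - (\<bar>inner x u0\<bar> + \<bar>r\<bar> + 1)"
        by (simp add: inner_diff_right inner_commute)
      then show ?thesis by linarith
    qed
    ultimately show ?thesis by (rule that)
  qed
qed

lemma frontier_neglog_inf_le:
  assumes "abs_conv_domain f \<noteq> UNIV" "\<And>j. x$j \<ge> 0" "psi x < ereal r"
  shows "(INF z\<in>frontier (interior (abs_conv_domain f)). \<Sum>j\<in>UNIV. neglogterm (x$j) (z$j)) \<le> ereal r"
proof -
  obtain u where u: "\<And>y. psi y \<le> ereal (- inner y u)" "- inner x u < r"
    using indicatrice_dual[OF assms(3)] by blast
  obtain s where s: "s \<ge> 0" "exp_ray u s \<in> frontier (interior (abs_conv_domain f))"
    using exp_ray_meets_frontier[OF assms(1) u(1)] by blast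
  have "(INF z\<in>frontier (interior (abs_conv_domain f)). \<Sum>j\<in>UNIV. neglogterm (x$j) (z$j))
      \<le> (\<Sum>j\<in>UNIV. neglogterm (x$j) (exp_ray u s $ j))" by (rule INF_lower[OF s(2)])
  also have "\<dots> \<le> ereal (- inner x u)" by (rule neglog_sum_exp_ray_le[OF assms(2) s(1)])
  finally show ?thesis using less_imp_le[OF u(2)] by (rule le_ereal_le)
qed

end

theorem corollary1:
  fixes f :: "nat ^ 'd \<Rightarrow> real"
  assumes nonneg: "\<And>i. f i \<ge> 0"
    and int_ne: "interior (abs_conv_domain f) \<noteq> {}"
    and int_ne_UNIV: "interior (abs_conv_domain f) \<noteq> UNIV"
    and CG: "\<exists>a b c. a > 0 \<and> b > 0 \<and> c > 0 \<and>
              (\<forall>x y. nu_ball f (x + y) a \<ge> c * nu_ball f x b * nu_ball f y b)"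
    and bdd: "(SUP x\<in>{x. l1norm x = 1}. indicatrice f x) < \<infinity>"
    and xnn: "\<And>j. x $ j \<ge> 0"
  shows "indicatrice f x =
    (INF z\<in>frontier (interior (abs_conv_domain f)). \<Sum>j\<in>UNIV. neglogterm (x $ j) (z $ j))"
proof -
  obtain a b c where "a > 0" "b > 0" "c > 0"
    "\<And>x y. nu_ball f (x + y) a \<ge> c * nu_ball f x b * nu_ball f y b" using CG by blast
  then interpret cg_bounded_power_series f a b c
    by unfold_locales (use nonneg bdd in auto)
  let ?I = "INF z\<in>frontier (interior (abs_conv_domain f)). \<Sum>j\<in>UNIV. neglogterm (x $ j) (z $ j)"
  have "abs_conv_domain f \<noteq> UNIV" using int_ne_UNIV by auto
  have "psi x \<le> ?I"
    using xnn by (intro INF_greatest indicatrice_le_neglog_sum) (auto simp: frontier_def)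
  moreover have "?I \<le> psi x"
  proof (rule dense_ge)
    fix e assume "psi x < e"
    then show "?I \<le> e"
      using frontier_neglog_inf_le[OF \<open>abs_conv_domain f \<noteq> UNIV\<close> xnn] by (cases e) auto
  qed
  ultimately show ?thesis by (rule antisym)
qed

end
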